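(* Let $Q$ be a multiplicative equivariantly supported reflexive based quantal frame, with base locale $A$, support $\varsigma$ and $\upsilon:Q\to A$, that satisfies the unit laws, and let $G$ be its associated involutive localic graph ($\mathcal O(G_0)=A$, $\mathcal O(G_1)=Q$, $d^*(a)=a\triangleright1_Q$, $i^*(x)=x^*$, $r=d\circ i$, $u^*=\upsilon$, $G_2$ the pullback of $r$ and $d$ with $\mathcal O(G_2)=Q\otimes_AQ$, $m^*(a)=\bigvee_{xy\le a}x\otimes y$). Then $G$ is an open involutive category.
   Context: For a locale $A$, an $A$-$A$-bimodule is a sup-lattice $M$ with actions $a\triangleright m$, $m\triangleleft a$ preserving joins in each variable, with $1_A\triangleright m=m$, $(a\wedge b)\triangleright m=a\triangleright(b\triangleright m)$, $m\triangleleft1_A=m$, $m\triangleleft(a\wedge b)=(m\triangleleft a)\triangleleft b$, $(a\triangleright m)\triangleleft b=a\triangleright(m\triangleleft b)$. An $A$-$A$-quantale is such a $Q$ with associative join-preserving multiplication and $(a\triangleright x)y=a\triangleright(xy)$, $(x\triangleleft a)y=x(a\triangleright y)$, $(xy)\triangleleft a=x(y\triangleleft a)$; involutive if there is a join-preserving $x\mapsto x^*$ with $x^{**}=x$, $(xy)^*=y^*x^*$, $(a\triangleright(x\triangleleft b))^*=b\triangleright(x^*\triangleleft a)$. $1_Q$ is the top. A support is a join-preserving $\varsigma:Q\to A$ with $\varsigma(1_Q)=1_A$, $\varsigma(x)\triangleright y\le xx^*y$, $\varsigma(x)\triangleright x=x$; equivariant if $\varsigma(a\triangleright x)=a\wedge\varsigma(x)$.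 A based quantal frame is an involutive $A$-$A$-quantale which is a frame with $(a\triangleright x)\wedge y=a\triangleright(x\wedge y)$, $(x\triangleleft a)\wedge y=(x\wedge y)\triangleleft a$; reflexive: a frame homomorphism $\upsilon:Q\to A$ with $\upsilon(a\triangleright1_Q)=a=\upsilon(1_Q\triangleleft a)$. $Q\otimes_AQ$ is $Q\otimes Q$ modulo $x\otimes(a\triangleright y)=(x\triangleleft a)\otimes y$; multiplicative: the right adjoint of the induced $\mu_A:Q\otimes_AQ\to Q$ preserves joins. Unit laws: $\bigvee_{xy\le a}\upsilon(x)\triangleright y=a$ for all $a\in Q$. An open involutive category is an internal category in locales (with $u$ as units) with an involution $i$ reversing composition ($i\circ i=\mathrm{id}$, $d\circ i=r$) and with $d$ open. *)

theory Defs
  imports Main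
begin

text \<open>A locale is represented by its frame of opens. The frames A and Q are types
(complete lattices satisfying the frame law). Frames constructed as tensor products
are represented as Moore families (carriers closed under arbitrary meets) inside a
powerset, ordered by inclusion; joins in a carrier are computed as least upper bounds
in that carrier.\<close>

definition is_frame :: "'a::complete_lattice itself \<Rightarrow> bool" where
  "is_frame _ \<longleftrightarrow> (\<forall>(x::'a) S. inf x (Sup S) = (SUP s\<in>S. inf x s))"

definition cjoin :: "'x::complete_lattice set \<Rightarrow> 'x set \<Rightarrow> 'x" where
  "cjoin C S = Inf {c \<in> C. \<forall>s\<in>S. s \<le> c}"

definition frame_hom :: "'x::complete_lattice set \<Rightarrow> 'y::complete_lattice set \<Rightarrow> ('x \<Rightarrow> 'y) \<Rightarrow> bool" where
  "frame_hom C D h \<longleftrightarrow>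
     (\<forall>x\<in>C. h x \<in> D) \<and>
     h top = top \<and>
     (\<forall>x\<in>C. \<forall>y\<in>C. h (inf x y) = inf (h x) (h y)) \<and>
     (\<forall>S. S \<subseteq> C \<longrightarrow> h (cjoin C S) = cjoin D (h ` S))"

definition open_map :: "('a::complete_lattice \<Rightarrow> 'q::complete_lattice) \<Rightarrow> bool" where
  "open_map fS \<longleftrightarrow> (\<exists>e. (\<forall>x a. e x \<le> a \<longleftrightarrow> x \<le> fS a) \<and>
                          (\<forall>x a. e (inf x (fS a)) = inf (e x) a))"

definition AA_bimodule :: "('a::complete_lattice \<Rightarrow> 'q::complete_lattice \<Rightarrow> 'q) \<Rightarrow> ('q \<Rightarrow> 'a \<Rightarrow> 'q) \<Rightarrow> bool" where
  "AA_bimodule la ra \<longleftrightarrow>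
     (\<forall>a Y. la a (Sup Y) = Sup (la a ` Y)) \<and>
     (\<forall>X y. la (Sup X) y = Sup ((\<lambda>a. la a y) ` X)) \<and>
     (\<forall>x B. ra x (Sup B) = Sup (ra x ` B)) \<and>
     (\<forall>X a. ra (Sup X) a = Sup ((\<lambda>x. ra x a) ` X)) \<and>
     (\<forall>m. la top m = m) \<and>
     (\<forall>a b m. la (inf a b) m = la a (la b m)) \<and>
     (\<forall>m. ra m top = m) \<and>
     (\<forall>a b m. ra m (inf a b) = ra (ra m a) b) \<and>
     (\<forall>a b m. ra (la a m) b = la a (ra m b))"

definition AA_quantale :: "('a::complete_lattice \<Rightarrow> 'q::complete_lattice \<Rightarrow> 'q) \<Rightarrow> ('q \<Rightarrow> 'a \<Rightarrow> 'q) \<Rightarrow> ('q \<Rightarrow> 'q \<Rightarrow> 'q) \<Rightarrow> bool" where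
  "AA_quantale la ra mult \<longleftrightarrow>
     AA_bimodule la ra \<and>
     (\<forall>x y z. mult (mult x y) z = mult x (mult y z)) \<and>
     (\<forall>x Y. mult x (Sup Y) = Sup (mult x ` Y)) \<and>
     (\<forall>X y. mult (Sup X) y = Sup ((\<lambda>x. mult x y) ` X)) \<and>
     (\<forall>a x y. mult (la a x) y = la a (mult x y)) \<and>
     (\<forall>a x y. mult (ra x a) y = mult x (la a y)) \<and>
     (\<forall>a x y. ra (mult x y) a = mult x (ra y a))"

definition involutive_AA_quantale :: "('a::complete_lattice \<Rightarrow> 'q::complete_lattice \<Rightarrow> 'q) \<Rightarrow> ('q \<Rightarrow> 'a \<Rightarrow> 'q) \<Rightarrow> ('q \<Rightarrow> 'q \<Rightarrow> 'q) \<Rightarrow> ('q \<Rightarrow> 'q) \<Rightarrow> bool" where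
  "involutive_AA_quantale la ra mult star \<longleftrightarrow>
     AA_quantale la ra mult \<and>
     (\<forall>X. star (Sup X) = Sup (star ` X)) \<and>
     (\<forall>x. star (star x) = x) \<and>
     (\<forall>x y. star (mult x y) = mult (star y) (star x)) \<and>
     (\<forall>a b x. star (la a (ra x b)) = la b (ra (star x) a))"

text \<open>Support (the unit 1_Q of Q is its top element).\<close>
definition support :: "('a::complete_lattice \<Rightarrow> 'q::complete_lattice \<Rightarrow> 'q) \<Rightarrow> ('q \<Rightarrow> 'q \<Rightarrow> 'q) \<Rightarrow> ('q \<Rightarrow> 'q) \<Rightarrow> ('q \<Rightarrow> 'a) \<Rightarrow> bool" where
  "support la mult star supp \<longleftrightarrow>
     (\<forall>X. supp (Sup X) = Sup (supp ` X)) \<and>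
     supp top = top \<and>
     (\<forall>x y. la (supp x) y \<le> mult (mult x (star x)) y) \<and>
     (\<forall>x. la (supp x) x = x)"

definition equivariant_support :: "('a::complete_lattice \<Rightarrow> 'q::complete_lattice \<Rightarrow> 'q) \<Rightarrow> ('q \<Rightarrow> 'a) \<Rightarrow> bool" where
  "equivariant_support la supp \<longleftrightarrow> (\<forall>a x. supp (la a x) = inf a (supp x))"

definition based_quantal_frame :: "('a::complete_lattice \<Rightarrow> 'q::complete_lattice \<Rightarrow> 'q) \<Rightarrow> ('q \<Rightarrow> 'a \<Rightarrow> 'q) \<Rightarrow> ('q \<Rightarrow> 'q \<Rightarrow> 'q) \<Rightarrow> ('q \<Rightarrow> 'q) \<Rightarrow> bool" where
  "based_quantal_frame la ra mult star \<longleftrightarrow>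
     involutive_AA_quantale la ra mult star \<and>
     is_frame TYPE('q) \<and>
     (\<forall>a x y. inf (la a x) y = la a (inf x y)) \<and>
     (\<forall>a x y. inf (ra x a) y = ra (inf x y) a)"

definition reflexive_bqf :: "('a::complete_lattice \<Rightarrow> 'q::complete_lattice \<Rightarrow> 'q) \<Rightarrow> ('q \<Rightarrow> 'a \<Rightarrow> 'q) \<Rightarrow> ('q \<Rightarrow> 'a) \<Rightarrow> bool" where
  "reflexive_bqf la ra ups \<longleftrightarrow>
     frame_hom (UNIV::'q set) (UNIV::'a set) ups \<and>
     (\<forall>a. ups (la a top) = a) \<and> (\<forall>a. ups (ra top a) = a)"

text \<open>Elements of Q \<otimes>_A Q are represented (Joyal--Tierney) as the down-closed subsets of
Q \<times> Q that are closed under joins in each variable separately and are saturated with respect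
to the relation (x \<triangleleft> a) \<otimes> y = x \<otimes> (a \<triangleright> y); the order is inclusion.\<close>

definition tensA_ideal :: "('a::complete_lattice \<Rightarrow> 'q::complete_lattice \<Rightarrow> 'q) \<Rightarrow> ('q \<Rightarrow> 'a \<Rightarrow> 'q) \<Rightarrow> ('q \<times> 'q) set \<Rightarrow> bool" where
  "tensA_ideal la ra I \<longleftrightarrow>
     (\<forall>x y x' y'. (x, y) \<in> I \<longrightarrow> x' \<le> x \<longrightarrow> y' \<le> y \<longrightarrow> (x', y') \<in> I) \<and>
     (\<forall>X y. (\<forall>x\<in>X. (x, y) \<in> I) \<longrightarrow> (Sup X, y) \<in> I) \<and>
     (\<forall>x Y. (\<forall>y\<in>Y. (x, y) \<in> I) \<longrightarrow> (x, Sup Y) \<in> I) \<and>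
     (\<forall>x a y. (ra x a, y) \<in> I \<longleftrightarrow> (x, la a y) \<in> I)"

definition G2 :: "('a::complete_lattice \<Rightarrow> 'q::complete_lattice \<Rightarrow> 'q) \<Rightarrow> ('q \<Rightarrow> 'a \<Rightarrow> 'q) \<Rightarrow> ('q \<times> 'q) set set" where
  "G2 la ra = {I. tensA_ideal la ra I}"

definition tensA :: "('a::complete_lattice \<Rightarrow> 'q::complete_lattice \<Rightarrow> 'q) \<Rightarrow> ('q \<Rightarrow> 'a \<Rightarrow> 'q) \<Rightarrow> 'q \<Rightarrow> 'q \<Rightarrow> ('q \<times> 'q) set" where
  "tensA la ra x y = \<Inter>{I. tensA_ideal la ra I \<and> (x, y) \<in> I}"

definition pi1 :: "('a::complete_lattice \<Rightarrow> 'q::complete_lattice \<Rightarrow> 'q) \<Rightarrow> ('q \<Rightarrow> 'a \<Rightarrow> 'q) \<Rightarrow> 'q \<Rightarrow> ('q \<times> 'q) set" where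
  "pi1 la ra x = tensA la ra x top"

definition pi2 :: "('a::complete_lattice \<Rightarrow> 'q::complete_lattice \<Rightarrow> 'q) \<Rightarrow> ('q \<Rightarrow> 'a \<Rightarrow> 'q) \<Rightarrow> 'q \<Rightarrow> ('q \<times> 'q) set" where
  "pi2 la ra y = tensA la ra top y"

definition mS :: "('a::complete_lattice \<Rightarrow> 'q::complete_lattice \<Rightarrow> 'q) \<Rightarrow> ('q \<Rightarrow> 'a \<Rightarrow> 'q) \<Rightarrow> ('q \<Rightarrow> 'q \<Rightarrow> 'q) \<Rightarrow> 'q \<Rightarrow> ('q \<times> 'q) set" where
  "mS la ra mult a = cjoin (G2 la ra) {tensA la ra x y | x y. mult x y \<le> a}"

definition dS :: "('a::complete_lattice \<Rightarrow> 'q::complete_lattice \<Rightarrow> 'q) \<Rightarrow> 'a \<Rightarrow> 'q" where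
  "dS la a = la a top"

definition muA :: "('q::complete_lattice \<Rightarrow> 'q \<Rightarrow> 'q) \<Rightarrow> ('q \<times> 'q) set \<Rightarrow> 'q" where
  "muA mult I = Sup {mult x y | x y. (x, y) \<in> I}"

definition multiplicative :: "('a::complete_lattice \<Rightarrow> 'q::complete_lattice \<Rightarrow> 'q) \<Rightarrow> ('q \<Rightarrow> 'a \<Rightarrow> 'q) \<Rightarrow> ('q \<Rightarrow> 'q \<Rightarrow> 'q) \<Rightarrow> bool" where
  "multiplicative la ra mult \<longleftrightarrow>
     (\<exists>\<rho>. (\<forall>a. \<rho> a \<in> G2 la ra) \<and>
          (\<forall>I\<in>G2 la ra. \<forall>a. muA mult I \<le> a \<longleftrightarrow> I \<subseteq> \<rho> a) \<and>
          (\<forall>S. \<rho> (Sup S) = cjoin (G2 la ra) (\<rho> ` S)))"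

definition unit_laws :: "('a::complete_lattice \<Rightarrow> 'q::complete_lattice \<Rightarrow> 'q) \<Rightarrow> ('q \<Rightarrow> 'q \<Rightarrow> 'q) \<Rightarrow> ('q \<Rightarrow> 'a) \<Rightarrow> bool" where
  "unit_laws la mult ups \<longleftrightarrow> (\<forall>a. Sup {la (ups x) y | x y. mult x y \<le> a} = a)"

section \<open>The triple tensor Q \<otimes>_A Q \<otimes>_A Q (frame of G_3 = G_1 \<times>_{G_0} G_1 \<times>_{G_0} G_1)\<close>

definition tens3_ideal :: "('a::complete_lattice \<Rightarrow> 'q::complete_lattice \<Rightarrow> 'q) \<Rightarrow> ('q \<Rightarrow> 'a \<Rightarrow> 'q) \<Rightarrow> ('q \<times> 'q \<times> 'q) set \<Rightarrow> bool" where
  "tens3_ideal la ra J \<longleftrightarrow>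
     (\<forall>x y z x' y' z'. (x, y, z) \<in> J \<longrightarrow> x' \<le> x \<longrightarrow> y' \<le> y \<longrightarrow> z' \<le> z \<longrightarrow> (x', y', z') \<in> J) \<and>
     (\<forall>X y z. (\<forall>x\<in>X. (x, y, z) \<in> J) \<longrightarrow> (Sup X, y, z) \<in> J) \<and>
     (\<forall>x Y z. (\<forall>y\<in>Y. (x, y, z) \<in> J) \<longrightarrow> (x, Sup Y, z) \<in> J) \<and>
     (\<forall>x y Z. (\<forall>z\<in>Z. (x, y, z) \<in> J) \<longrightarrow> (x, y, Sup Z) \<in> J) \<and>
     (\<forall>x a y z. (ra x a, y, z) \<in> J \<longleftrightarrow> (x, la a y, z) \<in> J) \<and>
     (\<forall>x a y z. (x, ra y a, z) \<in> J \<longleftrightarrow> (x, y, la a z) \<in> J)"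

definition G3 :: "('a::complete_lattice \<Rightarrow> 'q::complete_lattice \<Rightarrow> 'q) \<Rightarrow> ('q \<Rightarrow> 'a \<Rightarrow> 'q) \<Rightarrow> ('q \<times> 'q \<times> 'q) set set" where
  "G3 la ra = {J. tens3_ideal la ra J}"

definition p12 :: "('a::complete_lattice \<Rightarrow> 'q::complete_lattice \<Rightarrow> 'q) \<Rightarrow> ('q \<Rightarrow> 'a \<Rightarrow> 'q) \<Rightarrow> ('q \<times> 'q) set \<Rightarrow> ('q \<times> 'q \<times> 'q) set" where
  "p12 la ra I = \<Inter>{J. tens3_ideal la ra J \<and> {(x, y, z). (x, y) \<in> I} \<subseteq> J}"

definition p23 :: "('a::complete_lattice \<Rightarrow> 'q::complete_lattice \<Rightarrow> 'q) \<Rightarrow> ('q \<Rightarrow> 'a \<Rightarrow> 'q) \<Rightarrow> ('q \<times> 'q) set \<Rightarrow> ('q \<times> 'q \<times> 'q) set" where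
  "p23 la ra I = \<Inter>{J. tens3_ideal la ra J \<and> {(x, y, z). (y, z) \<in> I} \<subseteq> J}"

text \<open>h is (the inverse image of) the pairing \<langle>f, g\<rangle> into the pullback G_2, i.e.
h \<circ> \<pi>_1^* = f^* and h \<circ> \<pi>_2^* = g^*.\<close>
definition is_pairing :: "'p::complete_lattice set \<Rightarrow> ('q \<Rightarrow> 'p) \<Rightarrow> ('q \<Rightarrow> 'p) \<Rightarrow> 'y::complete_lattice set
      \<Rightarrow> ('q \<Rightarrow> 'y) \<Rightarrow> ('q \<Rightarrow> 'y) \<Rightarrow> ('p \<Rightarrow> 'y) \<Rightarrow> bool" where
  "is_pairing P p1 p2 Y fS gS h \<longleftrightarrow> frame_hom P Y h \<and> h \<circ> p1 = fS \<and> h \<circ> p2 = gS"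

definition induced_law :: "(('p \<Rightarrow> 'y) \<Rightarrow> bool) \<Rightarrow> (('p \<Rightarrow> 'y) \<Rightarrow> bool) \<Rightarrow> bool" where
  "induced_law P L \<longleftrightarrow> (\<exists>h. P h) \<and> (\<forall>h. P h \<longrightarrow> L h)"

text \<open>Involutive localic graph given by inverse images: G_0 with frame 'a, G_1 with frame 'q,
G_2 with frame carrier P2 and projections pr1, pr2, G_3 with frame carrier P3 and projections
q12, q23 : G_3 \<rightarrow> G_2; source d, unit u, multiplication m, involution i; r = d \<circ> i.
Composition of locale maps is reversed on inverse images.\<close>
definition open_involutive_category ::
  "'p::complete_lattice set \<Rightarrow> ('q::complete_lattice \<Rightarrow> 'p) \<Rightarrow> ('q \<Rightarrow> 'p) \<Rightarrow>
   't::complete_lattice set \<Rightarrow> ('p \<Rightarrow> 't) \<Rightarrow> ('p \<Rightarrow> 't) \<Rightarrow>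
   ('a::complete_lattice \<Rightarrow> 'q) \<Rightarrow> ('q \<Rightarrow> 'a) \<Rightarrow> ('q \<Rightarrow> 'p) \<Rightarrow> ('q \<Rightarrow> 'q) \<Rightarrow> bool" where
  "open_involutive_category P2 pr1 pr2 P3 q12 q23 dS' uS mS' iS \<longleftrightarrow>
     (let rS = iS \<circ> dS' in
       \<comment> \<open>structure maps are locale maps\<close>
       frame_hom (UNIV::'a set) (UNIV::'q set) dS' \<and>
       frame_hom (UNIV::'q set) (UNIV::'a set) uS \<and>
       frame_hom (UNIV::'q set) P2 mS' \<and>
       frame_hom (UNIV::'q set) (UNIV::'q set) iS \<and>
       \<comment> \<open>d \<circ> u = id, r \<circ> u = id\<close>
       uS \<circ> dS' = id \<and> uS \<circ> rS = id \<and>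
       \<comment> \<open>d \<circ> m = d \<circ> \<pi>_1, r \<circ> m = r \<circ> \<pi>_2\<close>
       mS' \<circ> dS' = pr1 \<circ> dS' \<and> mS' \<circ> rS = pr2 \<circ> rS \<and>
       \<comment> \<open>m \<circ> \<langle>u \<circ> d, id\<rangle> = id\<close>
       induced_law (is_pairing P2 pr1 pr2 (UNIV::'q set) (dS' \<circ> uS) id) (\<lambda>h. h \<circ> mS' = id) \<and>
       \<comment> \<open>m \<circ> \<langle>id, u \<circ> r\<rangle> = id\<close>
       induced_law (is_pairing P2 pr1 pr2 (UNIV::'q set) id (rS \<circ> uS)) (\<lambda>h. h \<circ> mS' = id) \<and>
       \<comment> \<open>associativity: m \<circ> (m \<times> id) = m \<circ> (id \<times> m), where
           m \<times> id = \<langle>m \<circ> p_12, p_3\<rangle> and id \<times> m = \<langle>p_1, m \<circ> p_23\<rangle>\<close>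
       (\<exists>h1. is_pairing P2 pr1 pr2 P3 (q12 \<circ> mS') (q23 \<circ> pr2) h1) \<and>
       (\<exists>h2. is_pairing P2 pr1 pr2 P3 (q12 \<circ> pr1) (q23 \<circ> mS') h2) \<and>
       (\<forall>h1 h2. is_pairing P2 pr1 pr2 P3 (q12 \<circ> mS') (q23 \<circ> pr2) h1 \<longrightarrow>
                is_pairing P2 pr1 pr2 P3 (q12 \<circ> pr1) (q23 \<circ> mS') h2 \<longrightarrow>
                h1 \<circ> mS' = h2 \<circ> mS') \<and>
       \<comment> \<open>involution: i \<circ> i = id, d \<circ> i = r, i \<circ> m = m \<circ> \<langle>i \<circ> \<pi>_2, i \<circ> \<pi>_1\<rangle>\<close>
       iS \<circ> iS = id \<and> iS \<circ> dS' = rS \<and>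
       induced_law (is_pairing P2 pr1 pr2 P2 (pr2 \<circ> iS) (pr1 \<circ> iS)) (\<lambda>h. mS' \<circ> iS = h \<circ> mS') \<and>
       \<comment> \<open>d is open\<close>
       open_map dS')"

end

theory Submission
  imports Defs
begin

text \<open>
  Thanks to the support, the tensor product \<open>Q \<otimes>\<^sub>A Q\<close> can be described explicitly:
  \<open>x \<otimes> y\<close> consists of the pairs \<open>(u, v)\<close> with \<open>u \<triangleleft> supp v \<le> x\<close> and
  \<open>rsupp u \<triangleright> v \<le> y\<close>, where \<open>rsupp u = supp (u\<^sup>*)\<close>; hence \<open>x \<otimes> y = \<pi>\<^sub>1\<^sup>*(x) \<and> \<pi>\<^sub>2\<^sup>*(y)\<close>,
  and \<open>m\<^sup>*(a)\<close> consists of the pairs with \<open>uv \<le> a\<close>. A frame homomorphism out of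
  \<open>Q \<otimes>\<^sub>A Q\<close> is therefore determined by its composites with the two projections, and every
  axiom of an open involutive category becomes an identity in \<open>Q\<close>: the unit laws of \<open>Q\<close> give the
  unit laws, associativity of the multiplication gives associativity, the involution of \<open>Q\<close> gives
  that of \<open>G\<close>, and \<open>supp\<close> is the left adjoint witnessing that \<open>d\<close> is open.
  The pairing maps needed to state these laws are inverse images of explicit maps of pairs and
  triples; they preserve joins because they have right adjoints. For \<open>(m \<times> id)\<^sup>*\<close> the right
  adjoint is built from \<open>m\<^sup>*\<close>, and this is where multiplicativity is used.
\<close>

section \<open>Frames and joins in Moore families\<close>

lemma mono_if_Sup_preserving:
  fixes f :: "'x::complete_lattice \<Rightarrow> 'y::complete_lattice"
  assumes "\<And>X. f (Sup X) = Sup (f ` X)"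
  shows "mono f"
proof
  fix x y :: 'x
  assume "x \<le> y"
  then have "f y = sup (f x) (f y)"
    using assms[of "{x, y}"] by (simp add: sup_absorb2)
  then show "f x \<le> f y"
    by (metis sup.cobounded1)
qed

lemma inf_Sup_Sup:
  fixes A B :: "'x::complete_lattice set"
  assumes "is_frame TYPE('x)"
  shows "inf (Sup A) (Sup B) = Sup {inf a b | a b. a \<in> A \<and> b \<in> B}"
proof -
  have distrib: "inf x (Sup S) = (SUP s\<in>S. inf x s)" for x :: 'x and S
    using assms unfolding is_frame_def by blast
  have "inf (Sup A) (Sup B) = (SUP a\<in>A. inf (Sup B) a)"
    by (subst inf_commute) (rule distrib)
  also have "\<dots> = (SUP a\<in>A. inf a (Sup B))"
    by (simp only: inf_commute)
  also have "\<dots> = (SUP a\<in>A. SUP b\<in>B. inf a b)"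
    by (simp only: distrib)
  also have "\<dots> = Sup {inf a b | a b. a \<in> A \<and> b \<in> B}"
    by (rule antisym) (auto intro!: SUP_least Sup_least intro: Sup_upper SUP_upper2)
  finally show ?thesis .
qed

lemma Sup_preserving2_mono:
  fixes f :: "'x::complete_lattice \<Rightarrow> 'y::complete_lattice \<Rightarrow> 'z::complete_lattice"
  assumes "\<And>X y. f (Sup X) y = Sup ((\<lambda>x. f x y) ` X)" and "\<And>x Y. f x (Sup Y) = Sup (f x ` Y)"
    and "x \<le> x'" and "y \<le> y'"
  shows "f x y \<le> f x' y'"
proof -
  have "mono (\<lambda>x. f x y)" and "mono (f x')"
    using assms(1,2) by (auto intro!: mono_if_Sup_preserving)
  then show ?thesis
    using assms(3,4) by (meson monoD order_trans)
qed

lemma image_Collect_pairs: "f ` {g x y | x y. P x y} = {f (g x y) | x y. P x y}"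
  by blast

lemma cjoin_UNIV: "cjoin UNIV S = Sup S"
  unfolding cjoin_def by (rule antisym) (auto intro: Inf_lower Sup_least Inf_greatest Sup_upper)

lemma cjoin_upper: "s \<in> S \<Longrightarrow> s \<le> cjoin C S"
  unfolding cjoin_def by (auto intro: Inf_greatest)

lemma cjoin_least: "c \<in> C \<Longrightarrow> (\<And>s. s \<in> S \<Longrightarrow> s \<le> c) \<Longrightarrow> cjoin C S \<le> c"
  unfolding cjoin_def by (auto intro: Inf_lower)

lemma cjoin_closed: "(\<And>F. F \<subseteq> C \<Longrightarrow> Inf F \<in> C) \<Longrightarrow> cjoin C S \<in> C"
  unfolding cjoin_def by auto

lemma cjoin_left_adjoint:
  assumes C: "\<And>F. F \<subseteq> C \<Longrightarrow> Inf F \<in> C" and D: "\<And>F. F \<subseteq> D \<Longrightarrow> Inf F \<in> D"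
    and g: "\<And>x. x \<in> C \<Longrightarrow> g x \<in> D" and k: "\<And>y. y \<in> D \<Longrightarrow> k y \<in> C"
    and adj: "\<And>x y. x \<in> C \<Longrightarrow> y \<in> D \<Longrightarrow> g x \<le> y \<longleftrightarrow> x \<le> k y"
    and S: "S \<subseteq> C"
  shows "g (cjoin C S) = cjoin D (g ` S)"
proof (rule antisym)
  have join_C: "cjoin C S \<in> C" and join_D: "cjoin D (g ` S) \<in> D"
    using cjoin_closed C D by blast+
  have "cjoin C S \<le> k (cjoin D (g ` S))"
  proof (rule cjoin_least)
    fix s assume "s \<in> S"
    then show "s \<le> k (cjoin D (g ` S))"
      using adj[of s] S join_D cjoin_upper[of "g s" "g ` S"] by blast
  qed (use join_D k in blast)
  then show "g (cjoin C S) \<le> cjoin D (g ` S)"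
    using adj join_C join_D by blast
  show "cjoin D (g ` S) \<le> g (cjoin C S)"
  proof (rule cjoin_least)
    fix t assume "t \<in> g ` S"
    then obtain s where "s \<in> S" "t = g s" by blast
    moreover have "cjoin C S \<le> k (g (cjoin C S))"
      using adj join_C g by blast
    ultimately show "t \<le> g (cjoin C S)"
      using adj[of s "g (cjoin C S)"] S join_C g cjoin_upper order_trans by blast
  qed (use join_C g in blast)
qed

lemma frame_homI:
  assumes "\<And>x. x \<in> C \<Longrightarrow> h x \<in> D" and "h top = top"
    and "\<And>x y. x \<in> C \<Longrightarrow> y \<in> C \<Longrightarrow> h (inf x y) = inf (h x) (h y)"
    and "\<And>S. S \<subseteq> C \<Longrightarrow> h (cjoin C S) = cjoin D (h ` S)"
  shows "frame_hom C D h"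
  unfolding frame_hom_def using assms by blast

lemma frame_hom_inf: "frame_hom C D h \<Longrightarrow> x \<in> C \<Longrightarrow> y \<in> C \<Longrightarrow> h (inf x y) = inf (h x) (h y)"
  unfolding frame_hom_def by blast

lemma frame_hom_cjoin: "frame_hom C D h \<Longrightarrow> S \<subseteq> C \<Longrightarrow> h (cjoin C S) = cjoin D (h ` S)"
  unfolding frame_hom_def by blast

lemma frame_hom_comp:
  assumes h: "frame_hom C D h" and k: "frame_hom D E k"
  shows "frame_hom C E (k \<circ> h)"
proof (rule frame_homI)
  fix S assume "S \<subseteq> C"
  moreover have "h ` S \<subseteq> D" if "S \<subseteq> C" for S
    using h that unfolding frame_hom_def by blast
  ultimately show "(k \<circ> h) (cjoin C S) = cjoin E ((k \<circ> h) ` S)"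
    using h k unfolding frame_hom_def by (simp add: image_comp)
qed (use h k in \<open>auto simp: frame_hom_def\<close>)

section \<open>Ideals of the tensor products\<close>

lemma tensA_idealI:
  assumes "\<And>x y x' y'. (x, y) \<in> I \<Longrightarrow> x' \<le> x \<Longrightarrow> y' \<le> y \<Longrightarrow> (x', y') \<in> I"
    and "\<And>X y. (\<And>x. x \<in> X \<Longrightarrow> (x, y) \<in> I) \<Longrightarrow> (Sup X, y) \<in> I"
    and "\<And>x Y. (\<And>y. y \<in> Y \<Longrightarrow> (x, y) \<in> I) \<Longrightarrow> (x, Sup Y) \<in> I"
    and "\<And>x a y. (ra x a, y) \<in> I \<longleftrightarrow> (x, la a y) \<in> I"
  shows "tensA_ideal la ra I"
  unfolding tensA_ideal_def using assms by (intro conjI allI impI) simp_all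

lemma tensA_ideal_down:
  "tensA_ideal la ra I \<Longrightarrow> (x, y) \<in> I \<Longrightarrow> x' \<le> x \<Longrightarrow> y' \<le> y \<Longrightarrow> (x', y') \<in> I"
  unfolding tensA_ideal_def by (drule conjunct1) blast

lemma tensA_ideal_Sup_left:
  "tensA_ideal la ra I \<Longrightarrow> (\<And>x. x \<in> X \<Longrightarrow> (x, y) \<in> I) \<Longrightarrow> (Sup X, y) \<in> I"
  unfolding tensA_ideal_def by (drule conjunct2, drule conjunct1) blast

lemma tensA_ideal_Sup_right:
  "tensA_ideal la ra I \<Longrightarrow> (\<And>y. y \<in> Y \<Longrightarrow> (x, y) \<in> I) \<Longrightarrow> (x, Sup Y) \<in> I"
  unfolding tensA_ideal_def by (drule conjunct2, drule conjunct2, drule conjunct1) blast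

lemma tensA_ideal_balanced:
  "tensA_ideal la ra I \<Longrightarrow> (ra x a, y) \<in> I \<longleftrightarrow> (x, la a y) \<in> I"
  unfolding tensA_ideal_def by (drule conjunct2, drule conjunct2, drule conjunct2) blast

lemma tensA_ideal_Inter:
  assumes "\<And>I. I \<in> F \<Longrightarrow> tensA_ideal la ra I"
  shows "tensA_ideal la ra (\<Inter>F)"
proof (rule tensA_idealI)
  fix x y x' y' assume "(x, y) \<in> \<Inter>F" "x' \<le> x" "y' \<le> y"
  then show "(x', y') \<in> \<Inter>F"
    using assms tensA_ideal_down by blast
next
  fix X y assume "\<And>x. x \<in> X \<Longrightarrow> (x, y) \<in> \<Inter>F"
  then show "(Sup X, y) \<in> \<Inter>F"
    using assms tensA_ideal_Sup_left by blast
next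
  fix x Y assume "\<And>y. y \<in> Y \<Longrightarrow> (x, y) \<in> \<Inter>F"
  then show "(x, Sup Y) \<in> \<Inter>F"
    using assms tensA_ideal_Sup_right by blast
next
  fix x a y show "(ra x a, y) \<in> \<Inter>F \<longleftrightarrow> (x, la a y) \<in> \<Inter>F"
    using assms tensA_ideal_balanced by blast
qed

lemma G2_Inf_closed: "F \<subseteq> G2 la ra \<Longrightarrow> Inf F \<in> G2 la ra"
  unfolding G2_def by (simp add: subset_eq tensA_ideal_Inter)

lemma tensA_ideal_tensA: "tensA_ideal la ra (tensA la ra x y)"
  unfolding tensA_def by (rule tensA_ideal_Inter) simp

lemma pair_in_tensA: "(x, y) \<in> tensA la ra x y"
  unfolding tensA_def by simp

lemma tensA_least: "tensA_ideal la ra I \<Longrightarrow> (x, y) \<in> I \<Longrightarrow> tensA la ra x y \<subseteq> I"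
  unfolding tensA_def by (simp add: Inter_lower)

lemma tensA_ideal_Int: "tensA_ideal la ra I \<Longrightarrow> tensA_ideal la ra J \<Longrightarrow> tensA_ideal la ra (I \<inter> J)"
  using tensA_ideal_Inter[of "{I, J}"] by auto

lemma G2_eq_cjoin_tensA:
  assumes "I \<in> G2 la ra"
  shows "I = cjoin (G2 la ra) {tensA la ra x y | x y. (x, y) \<in> I}"
proof (rule antisym)
  show "I \<subseteq> cjoin (G2 la ra) {tensA la ra x y | x y. (x, y) \<in> I}"
  proof
    fix p assume "p \<in> I"
    then obtain x y where "p = (x, y)" "(x, y) \<in> I" by (cases p) simp
    then have "tensA la ra x y \<subseteq> cjoin (G2 la ra) {tensA la ra x y | x y. (x, y) \<in> I}"
      by (intro cjoin_upper) blast
    then show "p \<in> cjoin (G2 la ra) {tensA la ra x y | x y. (x, y) \<in> I}"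
      using pair_in_tensA \<open>p = (x, y)\<close> by blast
  qed
  show "cjoin (G2 la ra) {tensA la ra x y | x y. (x, y) \<in> I} \<subseteq> I"
    using assms tensA_least by (intro cjoin_least) (auto simp: G2_def, blast)
qed

definition balanced_bimorphism ::
  "('a::complete_lattice \<Rightarrow> 'q::complete_lattice \<Rightarrow> 'q) \<Rightarrow> ('q \<Rightarrow> 'a \<Rightarrow> 'q) \<Rightarrow> ('q \<Rightarrow> 'q \<Rightarrow> 'b::complete_lattice) \<Rightarrow> bool"
  where "balanced_bimorphism la ra f \<longleftrightarrow>
    (\<forall>X y. f (Sup X) y = Sup ((\<lambda>x. f x y) ` X)) \<and>
    (\<forall>x Y. f x (Sup Y) = Sup (f x ` Y)) \<and>
    (\<forall>x a y. f (ra x a) y = f x (la a y))"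

lemma balanced_bimorphism_mono:
  assumes "balanced_bimorphism la ra f" and "x \<le> x'" and "y \<le> y'"
  shows "f x y \<le> f x' y'"
  using assms unfolding balanced_bimorphism_def by (blast intro: Sup_preserving2_mono)

lemma tensA_ideal_sublevel:
  assumes f: "balanced_bimorphism la ra f"
  shows "tensA_ideal la ra {(x, y). f x y \<le> t}"
proof (rule tensA_idealI)
  show "(x', y') \<in> {(x, y). f x y \<le> t}"
    if "(x, y) \<in> {(x, y). f x y \<le> t}" "x' \<le> x" "y' \<le> y" for x y x' y'
    using that balanced_bimorphism_mono[OF f] order_trans by blast
qed (use f in \<open>auto simp: balanced_bimorphism_def intro!: SUP_least\<close>)

definition tensA_lift :: "('q \<Rightarrow> 'q \<Rightarrow> 'b::complete_lattice) \<Rightarrow> ('q \<times> 'q) set \<Rightarrow> 'b" where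
  "tensA_lift f I = Sup {f x y | x y. (x, y) \<in> I}"

lemma tensA_lift_le_iff: "tensA_lift f I \<le> t \<longleftrightarrow> I \<subseteq> {(x, y). f x y \<le> t}"
  unfolding tensA_lift_def Sup_le_iff by auto

lemma tensA_lift_tensA:
  assumes "balanced_bimorphism la ra f"
  shows "tensA_lift f (tensA la ra x y) = f x y"
proof (rule antisym)
  show "tensA_lift f (tensA la ra x y) \<le> f x y"
    unfolding tensA_lift_le_iff by (rule tensA_least[OF tensA_ideal_sublevel[OF assms]]) simp
  show "f x y \<le> tensA_lift f (tensA la ra x y)"
    unfolding tensA_lift_def using pair_in_tensA by (blast intro: Sup_upper)
qed

lemma mS_eq:
  assumes "balanced_bimorphism la ra mult"
  shows "mS la ra mult a = {(x, y). mult x y \<le> a}"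
proof (rule antisym)
  show "mS la ra mult a \<subseteq> {(x, y). mult x y \<le> a}"
    unfolding mS_def using tensA_ideal_sublevel[OF assms] tensA_least
    by (intro cjoin_least) (auto simp: G2_def, blast)
  show "{(x, y). mult x y \<le> a} \<subseteq> mS la ra mult a"
  proof clarify
    fix x y assume "mult x y \<le> a"
    then have "tensA la ra x y \<subseteq> mS la ra mult a"
      unfolding mS_def by (intro cjoin_upper) blast
    then show "(x, y) \<in> mS la ra mult a"
      using pair_in_tensA by blast
  qed
qed

lemma frame_hom_tensA_lift:
  fixes f :: "'q::complete_lattice \<Rightarrow> 'q \<Rightarrow> 'b::complete_lattice"
  assumes frame: "is_frame TYPE('b)" and f: "balanced_bimorphism la ra f"
    and top: "f top top = top"
    and inf: "\<And>x y x' y'. f (inf x x') (inf y y') = inf (f x y) (f x' y')"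
  shows "frame_hom (G2 la ra) UNIV (tensA_lift f)"
proof (rule frame_homI)
  have "top \<le> tensA_lift f top"
    unfolding tensA_lift_def top[symmetric] by (rule Sup_upper) auto
  then show "tensA_lift f top = top"
    by (rule top_unique[THEN iffD1])
next
  fix I J assume "I \<in> G2 la ra" "J \<in> G2 la ra"
  then have I: "tensA_ideal la ra I" and J: "tensA_ideal la ra J"
    by (simp_all add: G2_def)
  show "tensA_lift f (inf I J) = inf (tensA_lift f I) (tensA_lift f J)"
  proof (rule antisym)
    show "tensA_lift f (inf I J) \<le> inf (tensA_lift f I) (tensA_lift f J)"
      unfolding tensA_lift_def by (intro le_infI Sup_subset_mono) auto
    have "inf (f x y) (f x' y') \<le> tensA_lift f (inf I J)" if "(x, y) \<in> I" "(x', y') \<in> J" for x y x' y'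
    proof -
      have "(inf x x', inf y y') \<in> inf I J"
        using tensA_ideal_down[OF I that(1)] tensA_ideal_down[OF J that(2)] by simp
      then show ?thesis
        unfolding tensA_lift_def inf[symmetric] by (intro Sup_upper) blast
    qed
    then show "inf (tensA_lift f I) (tensA_lift f J) \<le> tensA_lift f (inf I J)"
      unfolding tensA_lift_def[of f I] tensA_lift_def[of f J] inf_Sup_Sup[OF frame]
      by (intro Sup_least) blast
  qed
next
  fix S assume "S \<subseteq> G2 la ra"
  moreover have "tensA_lift f I \<le> t \<longleftrightarrow> I \<subseteq> {(x, y). f x y \<le> t}" for I t
    by (rule tensA_lift_le_iff)
  moreover have "{(x, y). f x y \<le> t} \<in> G2 la ra" for t
    using tensA_ideal_sublevel[OF f] by (simp add: G2_def)
  ultimately show "tensA_lift f (cjoin (G2 la ra) S) = cjoin UNIV (tensA_lift f ` S)"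
    by (intro cjoin_left_adjoint[where k = "\<lambda>t. {(x, y). f x y \<le> t}"] G2_Inf_closed) simp_all
qed simp

lemma tens3_idealI:
  assumes "\<And>x y z x' y' z'. (x, y, z) \<in> J \<Longrightarrow> x' \<le> x \<Longrightarrow> y' \<le> y \<Longrightarrow> z' \<le> z \<Longrightarrow> (x', y', z') \<in> J"
    and "\<And>X y z. (\<And>x. x \<in> X \<Longrightarrow> (x, y, z) \<in> J) \<Longrightarrow> (Sup X, y, z) \<in> J"
    and "\<And>x Y z. (\<And>y. y \<in> Y \<Longrightarrow> (x, y, z) \<in> J) \<Longrightarrow> (x, Sup Y, z) \<in> J"
    and "\<And>x y Z. (\<And>z. z \<in> Z \<Longrightarrow> (x, y, z) \<in> J) \<Longrightarrow> (x, y, Sup Z) \<in> J"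
    and "\<And>x a y z. (ra x a, y, z) \<in> J \<longleftrightarrow> (x, la a y, z) \<in> J"
    and "\<And>x a y z. (x, ra y a, z) \<in> J \<longleftrightarrow> (x, y, la a z) \<in> J"
  shows "tens3_ideal la ra J"
  unfolding tens3_ideal_def using assms by (intro conjI allI impI) simp_all

lemma tens3_ideal_down:
  "tens3_ideal la ra J \<Longrightarrow> (x, y, z) \<in> J \<Longrightarrow> x' \<le> x \<Longrightarrow> y' \<le> y \<Longrightarrow> z' \<le> z \<Longrightarrow> (x', y', z') \<in> J"
  unfolding tens3_ideal_def by (drule conjunct1) blast

lemma tens3_ideal_Sup_1:
  "tens3_ideal la ra J \<Longrightarrow> (\<And>x. x \<in> X \<Longrightarrow> (x, y, z) \<in> J) \<Longrightarrow> (Sup X, y, z) \<in> J"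
  unfolding tens3_ideal_def by (drule conjunct2, drule conjunct1) blast

lemma tens3_ideal_Sup_2:
  "tens3_ideal la ra J \<Longrightarrow> (\<And>y. y \<in> Y \<Longrightarrow> (x, y, z) \<in> J) \<Longrightarrow> (x, Sup Y, z) \<in> J"
  unfolding tens3_ideal_def by (drule conjunct2, drule conjunct2, drule conjunct1) blast

lemma tens3_ideal_Sup_3:
  "tens3_ideal la ra J \<Longrightarrow> (\<And>z. z \<in> Z \<Longrightarrow> (x, y, z) \<in> J) \<Longrightarrow> (x, y, Sup Z) \<in> J"
  unfolding tens3_ideal_def by (drule conjunct2, drule conjunct2, drule conjunct2, drule conjunct1) blast

lemma tens3_ideal_balanced_12:
  "tens3_ideal la ra J \<Longrightarrow> (ra x a, y, z) \<in> J \<longleftrightarrow> (x, la a y, z) \<in> J"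
  unfolding tens3_ideal_def
  by (drule conjunct2, drule conjunct2, drule conjunct2, drule conjunct2, drule conjunct1) blast

lemma tens3_ideal_balanced_23:
  "tens3_ideal la ra J \<Longrightarrow> (x, ra y a, z) \<in> J \<longleftrightarrow> (x, y, la a z) \<in> J"
  unfolding tens3_ideal_def
  by (drule conjunct2, drule conjunct2, drule conjunct2, drule conjunct2, drule conjunct2) blast

lemma tens3_ideal_Inter:
  assumes "\<And>J. J \<in> F \<Longrightarrow> tens3_ideal la ra J"
  shows "tens3_ideal la ra (\<Inter>F)"
proof (rule tens3_idealI)
  fix x y z x' y' z' assume "(x, y, z) \<in> \<Inter>F" "x' \<le> x" "y' \<le> y" "z' \<le> z"
  then show "(x', y', z') \<in> \<Inter>F"
    using assms tens3_ideal_down by blast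
next
  fix X y z assume "\<And>x. x \<in> X \<Longrightarrow> (x, y, z) \<in> \<Inter>F"
  then show "(Sup X, y, z) \<in> \<Inter>F"
    using assms tens3_ideal_Sup_1 by blast
next
  fix x Y z assume "\<And>y. y \<in> Y \<Longrightarrow> (x, y, z) \<in> \<Inter>F"
  then show "(x, Sup Y, z) \<in> \<Inter>F"
    using assms tens3_ideal_Sup_2 by blast
next
  fix x y Z assume "\<And>z. z \<in> Z \<Longrightarrow> (x, y, z) \<in> \<Inter>F"
  then show "(x, y, Sup Z) \<in> \<Inter>F"
    using assms tens3_ideal_Sup_3 by blast
next
  fix x a y z show "(ra x a, y, z) \<in> \<Inter>F \<longleftrightarrow> (x, la a y, z) \<in> \<Inter>F"
    using assms tens3_ideal_balanced_12 by blast
next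
  fix x a y z show "(x, ra y a, z) \<in> \<Inter>F \<longleftrightarrow> (x, y, la a z) \<in> \<Inter>F"
    using assms tens3_ideal_balanced_23 by blast
qed

lemma G3_Inf_closed: "F \<subseteq> G3 la ra \<Longrightarrow> Inf F \<in> G3 la ra"
  unfolding G3_def by (simp add: subset_eq tens3_ideal_Inter)

lemma p12_eqI:
  assumes "tens3_ideal la ra E" and "{(x, y, z). (x, y) \<in> I} \<subseteq> E"
    and "\<And>J. tens3_ideal la ra J \<Longrightarrow> {(x, y, z). (x, y) \<in> I} \<subseteq> J \<Longrightarrow> E \<subseteq> J"
  shows "p12 la ra I = E"
  unfolding p12_def using assms by (intro antisym Inter_greatest Inter_lower) auto

lemma p23_eqI:
  assumes "tens3_ideal la ra E" and "{(x, y, z). (y, z) \<in> I} \<subseteq> E"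
    and "\<And>J. tens3_ideal la ra J \<Longrightarrow> {(x, y, z). (y, z) \<in> I} \<subseteq> J \<Longrightarrow> E \<subseteq> J"
  shows "p23 la ra I = E"
  unfolding p23_def using assms by (intro antisym Inter_greatest Inter_lower) auto

lemma tensA_ideal_fibre_3:
  assumes "tens3_ideal la ra J"
  shows "tensA_ideal la ra {(x, y). (x, y, z) \<in> J}"
proof (rule tensA_idealI)
  fix x y x' y' assume "(x, y) \<in> {(x, y). (x, y, z) \<in> J}" "x' \<le> x" "y' \<le> y"
  then show "(x', y') \<in> {(x, y). (x, y, z) \<in> J}"
    using tens3_ideal_down[OF assms] by blast
next
  fix X y assume "\<And>x. x \<in> X \<Longrightarrow> (x, y) \<in> {(x, y). (x, y, z) \<in> J}"
  then show "(Sup X, y) \<in> {(x, y). (x, y, z) \<in> J}"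
    using tens3_ideal_Sup_1[OF assms] by blast
next
  fix x Y assume "\<And>y. y \<in> Y \<Longrightarrow> (x, y) \<in> {(x, y). (x, y, z) \<in> J}"
  then show "(x, Sup Y) \<in> {(x, y). (x, y, z) \<in> J}"
    using tens3_ideal_Sup_2[OF assms] by blast
qed (simp add: tens3_ideal_balanced_12[OF assms])

section \<open>Supported based quantal frames\<close>

locale supported_bqf =
  fixes la :: "'a::complete_lattice \<Rightarrow> 'q::complete_lattice \<Rightarrow> 'q"
    and ra :: "'q \<Rightarrow> 'a \<Rightarrow> 'q"
    and mult :: "'q \<Rightarrow> 'q \<Rightarrow> 'q"
    and star :: "'q \<Rightarrow> 'q"
    and supp :: "'q \<Rightarrow> 'a"
  assumes bqf: "based_quantal_frame la ra mult star"
    and support: "support la mult star supp"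
    and equivariant: "equivariant_support la supp"
begin

lemma
  shows la_Sup_right: "la a (Sup Y) = Sup (la a ` Y)"
    and la_Sup_left: "la (Sup A) y = Sup ((\<lambda>a. la a y) ` A)"
    and ra_Sup_right: "ra x (Sup B) = Sup (ra x ` B)"
    and ra_Sup_left: "ra (Sup X) a = Sup ((\<lambda>x. ra x a) ` X)"
    and la_top [simp]: "la top y = y"
    and la_inf: "la (inf a b) y = la a (la b y)"
    and ra_top [simp]: "ra x top = x"
    and ra_inf: "ra x (inf a b) = ra (ra x a) b"
    and mult_assoc: "mult (mult x y) z = mult x (mult y z)"
    and mult_Sup_right: "mult x (Sup Y) = Sup (mult x ` Y)"
    and mult_Sup_left: "mult (Sup X) y = Sup ((\<lambda>x. mult x y) ` X)"
    and mult_la: "mult (la a x) y = la a (mult x y)"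
    and mult_ra: "mult (ra x a) y = mult x (la a y)"
    and ra_mult: "ra (mult x y) a = mult x (ra y a)"
    and star_Sup: "star (Sup X) = Sup (star ` X)"
    and star_star [simp]: "star (star x) = x"
    and star_mult: "star (mult x y) = mult (star y) (star x)"
    and star_la_ra: "star (la a (ra x b)) = la b (ra (star x) a)"
    and frame_Q: "is_frame TYPE('q)"
    and la_inf_eq: "inf (la a x) y = la a (inf x y)"
    and ra_inf_eq: "inf (ra x a) y = ra (inf x y) a"
  using bqf
  unfolding based_quantal_frame_def involutive_AA_quantale_def AA_quantale_def AA_bimodule_def
  by simp_all

lemma
  shows supp_Sup: "supp (Sup X) = Sup (supp ` X)"
    and supp_la_le: "la (supp x) y \<le> mult (mult x (star x)) y"
    and supp_la_self [simp]: "la (supp x) x = x"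
    and supp_la: "supp (la a x) = inf a (supp x)"
  using support equivariant unfolding support_def equivariant_support_def by simp_all

lemma la_mono: "a \<le> b \<Longrightarrow> x \<le> y \<Longrightarrow> la a x \<le> la b y"
  by (rule Sup_preserving2_mono[of la]) (simp_all add: la_Sup_left la_Sup_right)

lemma ra_mono: "x \<le> y \<Longrightarrow> a \<le> b \<Longrightarrow> ra x a \<le> ra y b"
  by (rule Sup_preserving2_mono[of ra]) (simp_all add: ra_Sup_left ra_Sup_right)

lemma mult_mono: "x \<le> y \<Longrightarrow> x' \<le> y' \<Longrightarrow> mult x x' \<le> mult y y'"
  by (rule Sup_preserving2_mono[of mult]) (simp_all add: mult_Sup_left mult_Sup_right)

lemma star_mono: "x \<le> y \<Longrightarrow> star x \<le> star y"
  using mono_if_Sup_preserving[of star] star_Sup by (auto dest: monoD)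

lemma supp_mono: "x \<le> y \<Longrightarrow> supp x \<le> supp y"
  using mono_if_Sup_preserving[of supp] supp_Sup by (auto dest: monoD)

lemma star_le_iff: "star x \<le> y \<longleftrightarrow> x \<le> star y"
  using star_mono[of "star x" y] star_mono[of x "star y"] by auto

lemma star_top [simp]: "star top = top"
  using star_mono[OF top_greatest[of "star top"]] by (simp add: top_unique)

lemma star_la: "star (la a x) = ra (star x) a"
  using star_la_ra[of a x top] by simp

lemma star_ra: "star (ra x a) = la a (star x)"
  using star_la_ra[of top x a] by simp

lemma la_eq_inf: "la a y = inf (la a top) y"
  using la_inf_eq[of a top y] by simp

lemma ra_eq_inf: "ra y a = inf (ra top a) y"
  using ra_inf_eq[of top a y] by simp

lemma la_inf_inf: "la (inf a b) (inf y y') = inf (la a y) (la b y')"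
proof -
  have "la (inf a b) top = inf (la a top) (la b top)"
    using la_eq_inf[of a "la b top"] by (simp add: la_inf)
  then have "la (inf a b) (inf y y') = inf (inf (la a top) y) (inf (la b top) y')"
    by (simp add: la_eq_inf[of "inf a b" "inf y y'"] inf_aci)
  then show ?thesis
    by (simp add: la_eq_inf[of a y] la_eq_inf[of b y'])
qed

lemma la_le: "la a y \<le> y"
  by (rule ord_eq_le_trans[OF la_eq_inf inf.cobounded2])

lemma ra_le: "ra y a \<le> y"
  by (rule ord_eq_le_trans[OF ra_eq_inf inf.cobounded2])

lemma supp_le_iff: "supp x \<le> a \<longleftrightarrow> x \<le> la a top"
proof
  assume "supp x \<le> a"
  then show "x \<le> la a top"
    using la_mono[of "supp x" a x top] by simp
next
  assume "x \<le> la a top"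
  then show "supp x \<le> a"
    using supp_mono[of x "la a top"] by (simp add: supp_la)
qed

definition rsupp :: "'q \<Rightarrow> 'a" where
  "rsupp x = supp (star x)"

lemma rsupp_le_iff: "rsupp x \<le> a \<longleftrightarrow> x \<le> ra top a"
  unfolding rsupp_def supp_le_iff star_le_iff by (simp add: star_la)

lemma ra_rsupp_self [simp]: "ra x (rsupp x) = x"
  using arg_cong[OF supp_la_self[of "star x"], of star] unfolding rsupp_def star_la by simp

lemma rsupp_ra: "rsupp (ra x a) = inf a (rsupp x)"
  unfolding rsupp_def by (simp add: star_ra supp_la)

lemma rsupp_Sup: "rsupp (Sup X) = Sup (rsupp ` X)"
  unfolding rsupp_def by (simp add: star_Sup supp_Sup image_image)

lemma le_mult_top: "x \<le> mult x top"
proof -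
  have "x = la (supp x) x" by simp
  also have "\<dots> \<le> mult (mult x (star x)) x" by (rule supp_la_le)
  also have "\<dots> \<le> mult x top" by (simp add: mult_assoc mult_mono)
  finally show ?thesis .
qed

lemma supp_mult_le: "supp (mult x y) \<le> supp x"
proof -
  have "mult x y = la (supp x) (mult x y)"
    using mult_la[of "supp x" x y] by simp
  also have "\<dots> \<le> la (supp x) top"
    by (rule la_mono) simp_all
  finally show ?thesis
    by (simp add: supp_le_iff)
qed

lemma supp_mult: "supp (mult x y) = supp (ra x (supp y))"
proof (rule antisym)
  have "mult x y = mult (ra x (supp y)) y" by (simp add: mult_ra)
  then show "supp (mult x y) \<le> supp (ra x (supp y))"
    using supp_mult_le[of "ra x (supp y)" y] by simp
next
  have "ra x (supp y) \<le> mult (ra x (supp y)) top" by (rule le_mult_top)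
  also have "\<dots> = mult x (la (supp y) top)" by (rule mult_ra)
  also have "\<dots> \<le> mult x (mult (mult y (star y)) top)" by (intro mult_mono supp_la_le order_refl)
  also have "\<dots> = mult (mult x y) (mult (star y) top)" by (simp add: mult_assoc)
  finally show "supp (ra x (supp y)) \<le> supp (mult x y)"
    using supp_mono supp_mult_le order_trans by blast
qed

lemma rsupp_mult: "rsupp (mult x y) = rsupp (la (rsupp x) y)"
  unfolding rsupp_def by (simp add: star_mult supp_mult star_la)

lemma rsupp_mult_le: "rsupp (mult x y) \<le> rsupp y"
  unfolding rsupp_def by (simp add: star_mult supp_mult_le)

lemma balanced_mult: "balanced_bimorphism la ra mult"
  unfolding balanced_bimorphism_def by (simp add: mult_Sup_left mult_Sup_right mult_ra)

lemma balanced_ra_supp: "balanced_bimorphism la ra (\<lambda>u v. ra u (supp v))"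
  unfolding balanced_bimorphism_def
  by (simp add: ra_Sup_left ra_Sup_right supp_Sup image_image supp_la ra_inf[symmetric])

lemma balanced_la_rsupp: "balanced_bimorphism la ra (\<lambda>u v. la (rsupp u) v)"
  unfolding balanced_bimorphism_def
  by (simp add: la_Sup_left la_Sup_right rsupp_Sup image_image rsupp_ra la_inf[symmetric] inf_commute)

lemma tensA_eq: "tensA la ra x y = {(u, v). ra u (supp v) \<le> x \<and> la (rsupp u) v \<le> y}"
proof
  have "tensA_ideal la ra ({(u, v). ra u (supp v) \<le> x} \<inter> {(u, v). la (rsupp u) v \<le> y})"
    by (intro tensA_ideal_Int tensA_ideal_sublevel balanced_ra_supp balanced_la_rsupp)
  moreover have "(x, y) \<in> {(u, v). ra u (supp v) \<le> x} \<inter> {(u, v). la (rsupp u) v \<le> y}"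
    by (simp add: ra_le la_le)
  ultimately show "tensA la ra x y \<subseteq> {(u, v). ra u (supp v) \<le> x \<and> la (rsupp u) v \<le> y}"
    by (auto dest: tensA_least)
next
  let ?I = "tensA la ra x y"
  have I: "tensA_ideal la ra ?I" by (rule tensA_ideal_tensA)
  show "{(u, v). ra u (supp v) \<le> x \<and> la (rsupp u) v \<le> y} \<subseteq> ?I"
  proof clarify
    fix u v assume ux: "ra u (supp v) \<le> x" and vy: "la (rsupp u) v \<le> y"
    define u' where "u' = ra u (supp v)"
    have "la (rsupp u') v = la (supp v) (la (rsupp u) v)"
      by (simp add: u'_def rsupp_ra la_inf)
    also have "\<dots> \<le> y"
      using vy la_le order_trans by blast
    finally have "(u', la (rsupp u') v) \<in> ?I"
      using tensA_ideal_down[OF I pair_in_tensA] ux by (simp add: u'_def)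
    then have "(ra u' (rsupp u'), v) \<in> ?I"
      using tensA_ideal_balanced[OF I] by blast
    then have "(u, la (supp v) v) \<in> ?I"
      using tensA_ideal_balanced[OF I] by (simp add: u'_def)
    then show "(u, v) \<in> ?I"
      by simp
  qed
qed

lemma mem_pi1: "(u, v) \<in> pi1 la ra x \<longleftrightarrow> ra u (supp v) \<le> x"
  unfolding pi1_def tensA_eq by simp

lemma mem_pi2: "(u, v) \<in> pi2 la ra y \<longleftrightarrow> la (rsupp u) v \<le> y"
  unfolding pi2_def tensA_eq by simp

lemma tensA_eq_pi1_Int_pi2: "tensA la ra x y = pi1 la ra x \<inter> pi2 la ra y"
  by (auto simp: tensA_eq mem_pi1 mem_pi2)

lemma pi1_in_G2: "pi1 la ra x \<in> G2 la ra"
  unfolding pi1_def G2_def by (simp add: tensA_ideal_tensA)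

lemma pi2_in_G2: "pi2 la ra y \<in> G2 la ra"
  unfolding pi2_def G2_def by (simp add: tensA_ideal_tensA)

lemma mem_mS: "(x, y) \<in> mS la ra mult a \<longleftrightarrow> mult x y \<le> a"
  using mS_eq[OF balanced_mult] by simp

lemma mS_in_G2: "mS la ra mult a \<in> G2 la ra"
  using tensA_ideal_sublevel[OF balanced_mult] by (simp add: mS_eq[OF balanced_mult] G2_def)

lemma frame_hom_G2_eq:
  assumes h: "frame_hom (G2 la ra) Y h" and I: "I \<in> G2 la ra"
  shows "h I = cjoin Y {inf (h (pi1 la ra x)) (h (pi2 la ra y)) | x y. (x, y) \<in> I}"
proof -
  let ?T = "{tensA la ra x y | x y. (x, y) \<in> I}"
  have T: "?T \<subseteq> G2 la ra"
    using tensA_ideal_tensA by (auto simp: G2_def)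
  have tensA: "h (tensA la ra x y) = inf (h (pi1 la ra x)) (h (pi2 la ra y))" for x y
    unfolding tensA_eq_pi1_Int_pi2 by (rule frame_hom_inf[OF h pi1_in_G2 pi2_in_G2])
  have "h I = h (cjoin (G2 la ra) ?T)"
    by (rule arg_cong[OF G2_eq_cjoin_tensA[OF I]])
  also have "\<dots> = cjoin Y (h ` ?T)"
    by (rule frame_hom_cjoin[OF h T])
  also have "h ` ?T = {inf (h (pi1 la ra x)) (h (pi2 la ra y)) | x y. (x, y) \<in> I}"
    unfolding tensA[symmetric] by blast
  finally show ?thesis .
qed

lemma frame_hom_G2_eqI:
  assumes "frame_hom (G2 la ra) Y h" and "frame_hom (G2 la ra) Y h'"
    and "\<And>x. h (pi1 la ra x) = h' (pi1 la ra x)" and "\<And>y. h (pi2 la ra y) = h' (pi2 la ra y)"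
    and "I \<in> G2 la ra"
  shows "h I = h' I"
  using frame_hom_G2_eq[OF assms(1,5)] frame_hom_G2_eq[OF assms(2,5)] assms(3,4) by simp

definition twist :: "('q \<times> 'q) set \<Rightarrow> ('q \<times> 'q) set" where
  "twist I = {(x, y). (star y, star x) \<in> I}"

lemma twist_twist [simp]: "twist (twist I) = I"
  by (auto simp: twist_def)

lemma twist_subset_iff: "twist I \<subseteq> J \<longleftrightarrow> I \<subseteq> twist J"
  by (auto simp: twist_def)

lemma tensA_ideal_twist:
  assumes I: "tensA_ideal la ra I"
  shows "tensA_ideal la ra (twist I)"
proof (rule tensA_idealI)
  fix x y x' y' assume "(x, y) \<in> twist I" "x' \<le> x" "y' \<le> y"
  then show "(x', y') \<in> twist I"
    unfolding twist_def using tensA_ideal_down[OF I] star_mono by blast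
next
  fix X y assume "\<And>x. x \<in> X \<Longrightarrow> (x, y) \<in> twist I"
  then have "(star y, Sup (star ` X)) \<in> I"
    by (intro tensA_ideal_Sup_right[OF I]) (auto simp: twist_def)
  then show "(Sup X, y) \<in> twist I"
    by (simp add: twist_def star_Sup)
next
  fix x Y assume "\<And>y. y \<in> Y \<Longrightarrow> (x, y) \<in> twist I"
  then have "(Sup (star ` Y), star x) \<in> I"
    by (intro tensA_ideal_Sup_left[OF I]) (auto simp: twist_def)
  then show "(x, Sup Y) \<in> twist I"
    by (simp add: twist_def star_Sup)
next
  fix x a y show "(ra x a, y) \<in> twist I \<longleftrightarrow> (x, la a y) \<in> twist I"
    unfolding twist_def by (simp add: star_ra star_la tensA_ideal_balanced[OF I])
qed

lemma frame_hom_twist: "frame_hom (G2 la ra) (G2 la ra) twist"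
proof (rule frame_homI)
  fix S assume "S \<subseteq> G2 la ra"
  then show "twist (cjoin (G2 la ra) S) = cjoin (G2 la ra) (twist ` S)"
    using G2_Inf_closed tensA_ideal_twist twist_subset_iff
    by (intro cjoin_left_adjoint[where k = twist]) (auto simp: G2_def)
qed (auto simp: G2_def twist_def intro: tensA_ideal_twist[unfolded twist_def])

lemma twist_pi1: "twist (pi1 la ra x) = pi2 la ra (star x)"
proof -
  have "ra (star v) (supp (star u)) \<le> x \<longleftrightarrow> la (rsupp u) v \<le> star x" for u v
    by (metis star_le_iff star_la rsupp_def)
  then show ?thesis
    by (auto simp: twist_def mem_pi1 mem_pi2)
qed

lemma twist_pi2: "twist (pi2 la ra y) = pi1 la ra (star y)"
  by (metis twist_pi1 twist_twist star_star)

lemma twist_mS: "twist (mS la ra mult a) = mS la ra mult (star a)"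
proof -
  have "mult (star y) (star x) \<le> a \<longleftrightarrow> mult x y \<le> star a" for x y
    by (metis star_mult star_le_iff)
  then show ?thesis
    by (auto simp: twist_def mem_mS)
qed

definition reverse3 :: "('q \<times> 'q \<times> 'q) set \<Rightarrow> ('q \<times> 'q \<times> 'q) set" where
  "reverse3 J = {(x, y, z). (star z, star y, star x) \<in> J}"

lemma reverse3_subset_iff: "reverse3 J \<subseteq> K \<longleftrightarrow> J \<subseteq> reverse3 K"
  by (auto simp: reverse3_def)

lemma tens3_ideal_reverse3:
  assumes J: "tens3_ideal la ra J"
  shows "tens3_ideal la ra (reverse3 J)"
proof (rule tens3_idealI)
  fix x y z x' y' z' assume "(x, y, z) \<in> reverse3 J" "x' \<le> x" "y' \<le> y" "z' \<le> z"
  then show "(x', y', z') \<in> reverse3 J"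
    unfolding reverse3_def using tens3_ideal_down[OF J] star_mono by blast
next
  fix X y z assume "\<And>x. x \<in> X \<Longrightarrow> (x, y, z) \<in> reverse3 J"
  then have "(star z, star y, Sup (star ` X)) \<in> J"
    by (intro tens3_ideal_Sup_3[OF J]) (auto simp: reverse3_def)
  then show "(Sup X, y, z) \<in> reverse3 J"
    by (simp add: reverse3_def star_Sup)
next
  fix x Y z assume "\<And>y. y \<in> Y \<Longrightarrow> (x, y, z) \<in> reverse3 J"
  then have "(star z, Sup (star ` Y), star x) \<in> J"
    by (intro tens3_ideal_Sup_2[OF J]) (auto simp: reverse3_def)
  then show "(x, Sup Y, z) \<in> reverse3 J"
    by (simp add: reverse3_def star_Sup)
next
  fix x y Z assume "\<And>z. z \<in> Z \<Longrightarrow> (x, y, z) \<in> reverse3 J"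
  then have "(Sup (star ` Z), star y, star x) \<in> J"
    by (intro tens3_ideal_Sup_1[OF J]) (auto simp: reverse3_def)
  then show "(x, y, Sup Z) \<in> reverse3 J"
    by (simp add: reverse3_def star_Sup)
next
  fix x a y z show "(ra x a, y, z) \<in> reverse3 J \<longleftrightarrow> (x, la a y, z) \<in> reverse3 J"
    unfolding reverse3_def by (simp add: star_ra star_la tens3_ideal_balanced_23[OF J])
next
  fix x a y z show "(x, ra y a, z) \<in> reverse3 J \<longleftrightarrow> (x, y, la a z) \<in> reverse3 J"
    unfolding reverse3_def by (simp add: star_ra star_la tens3_ideal_balanced_12[OF J])
qed

lemma frame_hom_reverse3: "frame_hom (G3 la ra) (G3 la ra) reverse3"
proof (rule frame_homI)
  fix S assume "S \<subseteq> G3 la ra"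
  then show "reverse3 (cjoin (G3 la ra) S) = cjoin (G3 la ra) (reverse3 ` S)"
    using G3_Inf_closed tens3_ideal_reverse3 reverse3_subset_iff
    by (intro cjoin_left_adjoint[where k = reverse3]) (auto simp: G3_def)
qed (auto simp: G3_def reverse3_def intro: tens3_ideal_reverse3[unfolded reverse3_def])

lemma is_pairing_unique:
  assumes "is_pairing (G2 la ra) (pi1 la ra) (pi2 la ra) Y f g h"
    and "is_pairing (G2 la ra) (pi1 la ra) (pi2 la ra) Y f g h'"
    and "I \<in> G2 la ra"
  shows "h I = h' I"
proof (rule frame_hom_G2_eqI)
  show "frame_hom (G2 la ra) Y h" and "frame_hom (G2 la ra) Y h'"
    using assms(1,2) by (simp_all add: is_pairing_def)
  show "h (pi1 la ra x) = h' (pi1 la ra x)" and "h (pi2 la ra y) = h' (pi2 la ra y)" for x y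
    using assms(1,2) unfolding is_pairing_def by (metis comp_apply)+
qed (rule assms(3))

text \<open>A pair \<open>(x, y)\<close> with \<open>xy \<le> p \<triangleleft> a\<close> equals \<open>(x \<triangleleft> rsupp x, y)\<close>, so it is balanced
  against \<open>(x, y')\<close> with \<open>y' = rsupp x \<triangleright> y\<close>; and \<open>y'\<close> satisfies \<open>xy' \<le> p\<close> and \<open>y' \<triangleleft> a = y'\<close>.\<close>
lemma mS_ra_subset:
  assumes M: "tensA_ideal la ra M" and gen: "\<And>u v. mult u v \<le> p \<Longrightarrow> (u, ra v a) \<in> M"
  shows "mS la ra mult (ra p a) \<subseteq> M"
proof clarify
  fix x y assume "(x, y) \<in> mS la ra mult (ra p a)"
  then have xy: "mult x y \<le> ra p a"
    by (simp add: mem_mS)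
  define y' where "y' = la (rsupp x) y"
  have xy': "mult x y' = mult x y"
    unfolding y'_def using mult_ra[of x "rsupp x" y] by simp
  have "mult x y \<le> ra top a"
    using xy ra_mono[of p top a a] by simp
  then have "rsupp y' \<le> a"
    unfolding y'_def by (simp add: rsupp_le_iff[symmetric] rsupp_mult)
  then have "ra y' a = y'"
    by (simp add: rsupp_le_iff inf.absorb2 ra_eq_inf[of y'])
  moreover have "mult x y' \<le> p"
    using order_trans[OF xy ra_le] xy' by simp
  ultimately have "(x, y') \<in> M"
    using gen[of x y'] by simp
  then have "(ra x (rsupp x), y) \<in> M"
    unfolding y'_def using tensA_ideal_balanced[OF M] by blast
  then show "(x, y) \<in> M"
    by simp
qed

lemma star_inf: "star (inf x y) = inf (star x) (star y)"
proof (rule antisym)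
  show "star (inf x y) \<le> inf (star x) (star y)"
    by (simp add: star_mono)
  have "star (inf (star x) (star y)) \<le> inf x y"
    using star_mono[of "inf (star x) (star y)" "star x"] star_mono[of "inf (star x) (star y)" "star y"]
    by simp
  then show "inf (star x) (star y) \<le> star (inf x y)"
    using star_le_iff[of "inf (star x) (star y)" "inf x y"] by simp
qed

lemma star_comp_star: "star \<circ> star = id"
  by auto

lemma frame_hom_star: "frame_hom UNIV UNIV star"
  by (rule frame_homI) (simp_all add: star_inf cjoin_UNIV star_Sup)

lemma frame_hom_dS: "frame_hom UNIV UNIV (dS la)"
proof (rule frame_homI)
  show "dS la (inf a b) = inf (dS la a) (dS la b)" for a b
    unfolding dS_def by (metis la_eq_inf la_inf)
qed (simp_all add: dS_def cjoin_UNIV la_Sup_left)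

lemma open_map_dS: "open_map (dS la)"
  unfolding open_map_def
proof (intro exI conjI allI)
  show "supp x \<le> a \<longleftrightarrow> x \<le> dS la a" for x a
    by (simp add: dS_def supp_le_iff)
  fix x a
  have "supp (inf x (dS la a)) = supp (la a x)"
    by (simp add: dS_def la_eq_inf[of a x] inf_commute)
  also have "\<dots> = inf (supp x) a"
    by (simp add: supp_la inf_commute)
  finally show "supp (inf x (dS la a)) = inf (supp x) a" .
qed

lemma mS_comp_dS: "mS la ra mult \<circ> dS la = pi1 la ra \<circ> dS la"
proof
  fix a
  have "mult u v \<le> la a top \<longleftrightarrow> ra u (supp v) \<le> la a top" for u v
    by (simp add: supp_le_iff[symmetric] supp_mult)
  then show "(mS la ra mult \<circ> dS la) a = (pi1 la ra \<circ> dS la) a"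
    by (auto simp: dS_def mem_mS mem_pi1)
qed

lemma mS_comp_rS: "mS la ra mult \<circ> (star \<circ> dS la) = pi2 la ra \<circ> (star \<circ> dS la)"
proof
  fix a
  have "mult u v \<le> ra top a \<longleftrightarrow> la (rsupp u) v \<le> ra top a" for u v
    by (simp add: rsupp_le_iff[symmetric] rsupp_mult)
  then show "(mS la ra mult \<circ> (star \<circ> dS la)) a = (pi2 la ra \<circ> (star \<circ> dS la)) a"
    by (auto simp: dS_def star_la mem_mS mem_pi2)
qed

lemma mS_star_pairing:
  "induced_law (is_pairing (G2 la ra) (pi1 la ra) (pi2 la ra) (G2 la ra) (pi2 la ra \<circ> star) (pi1 la ra \<circ> star))
     (\<lambda>h. mS la ra mult \<circ> star = h \<circ> mS la ra mult)"
proof -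
  have twist: "is_pairing (G2 la ra) (pi1 la ra) (pi2 la ra) (G2 la ra) (pi2 la ra \<circ> star) (pi1 la ra \<circ> star) twist"
    by (auto simp: is_pairing_def frame_hom_twist twist_pi1 twist_pi2)
  have "mS la ra mult (star a) = h (mS la ra mult a)"
    if "is_pairing (G2 la ra) (pi1 la ra) (pi2 la ra) (G2 la ra) (pi2 la ra \<circ> star) (pi1 la ra \<circ> star) h"
    for h a
    using is_pairing_unique[OF twist that mS_in_G2] by (simp add: twist_mS)
  then show ?thesis
    unfolding induced_law_def using twist by (auto simp: fun_eq_iff)
qed

end

section \<open>Multiplicativity and associativity\<close>

locale multiplicative_supported_bqf = supported_bqf +
  assumes multiplicative: "multiplicative la ra mult"
begin

lemma mS_Sup: "mS la ra mult (Sup S) = cjoin (G2 la ra) (mS la ra mult ` S)"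
proof -
  obtain \<rho> where \<rho>: "(\<forall>a. \<rho> a \<in> G2 la ra) \<and>
      (\<forall>I\<in>G2 la ra. \<forall>a. muA mult I \<le> a \<longleftrightarrow> I \<subseteq> \<rho> a) \<and>
      (\<forall>S. \<rho> (Sup S) = cjoin (G2 la ra) (\<rho> ` S))"
    using multiplicative unfolding multiplicative_def by (elim exE)
  then have \<rho>_G2: "\<And>a. \<rho> a \<in> G2 la ra"
    and adj: "\<And>I a. I \<in> G2 la ra \<Longrightarrow> muA mult I \<le> a \<longleftrightarrow> I \<subseteq> \<rho> a"
    and \<rho>_Sup: "\<rho> (Sup S) = cjoin (G2 la ra) (\<rho> ` S)"
    by simp_all
  have "\<rho> = mS la ra mult"
  proof (intro ext set_eqI, clarify)
    fix a x y
    have "tensA_ideal la ra (\<rho> a)"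
      using \<rho>_G2 by (simp add: G2_def)
    then have "(x, y) \<in> \<rho> a \<longleftrightarrow> tensA la ra x y \<subseteq> \<rho> a"
      using tensA_least pair_in_tensA by blast
    also have "\<dots> \<longleftrightarrow> muA mult (tensA la ra x y) \<le> a"
      using adj[of "tensA la ra x y" a] tensA_ideal_tensA[of la ra x y] by (simp add: G2_def)
    also have "muA mult (tensA la ra x y) = mult x y"
      using tensA_lift_tensA[OF balanced_mult] by (simp add: muA_def tensA_lift_def)
    finally show "(x, y) \<in> \<rho> a \<longleftrightarrow> (x, y) \<in> mS la ra mult a"
      by (simp add: mem_mS)
  qed
  then show ?thesis
    using \<rho>_Sup by simp
qed

lemma frame_hom_mS: "frame_hom UNIV (G2 la ra) (mS la ra mult)"
proof (rule frame_homI)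
  show "mS la ra mult top = top"
    by (simp add: mS_eq[OF balanced_mult] top_set_def)
  show "mS la ra mult (inf a b) = inf (mS la ra mult a) (mS la ra mult b)" for a b
    by (auto simp: mem_mS)
qed (simp_all add: mS_in_G2 cjoin_UNIV mS_Sup)

definition mult_times_id where
  "mult_times_id I = {(u, v, w). (mult u v, w) \<in> I}"

definition id_times_mult where
  "id_times_mult I = {(u, v, w). (u, mult v w) \<in> I}"

lemma tens3_ideal_mult_times_id:
  assumes I: "tensA_ideal la ra I"
  shows "tens3_ideal la ra (mult_times_id I)"
proof (rule tens3_idealI)
  fix x y z x' y' z' assume "(x, y, z) \<in> mult_times_id I" "x' \<le> x" "y' \<le> y" "z' \<le> z"
  then show "(x', y', z') \<in> mult_times_id I"
    unfolding mult_times_id_def using tensA_ideal_down[OF I] mult_mono by blast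
next
  fix X y z assume "\<And>x. x \<in> X \<Longrightarrow> (x, y, z) \<in> mult_times_id I"
  then have "(Sup ((\<lambda>x. mult x y) ` X), z) \<in> I"
    by (intro tensA_ideal_Sup_left[OF I]) (auto simp: mult_times_id_def)
  then show "(Sup X, y, z) \<in> mult_times_id I"
    by (simp add: mult_times_id_def mult_Sup_left)
next
  fix x Y z assume "\<And>y. y \<in> Y \<Longrightarrow> (x, y, z) \<in> mult_times_id I"
  then have "(Sup (mult x ` Y), z) \<in> I"
    by (intro tensA_ideal_Sup_left[OF I]) (auto simp: mult_times_id_def)
  then show "(x, Sup Y, z) \<in> mult_times_id I"
    by (simp add: mult_times_id_def mult_Sup_right)
next
  fix x y Z assume "\<And>z. z \<in> Z \<Longrightarrow> (x, y, z) \<in> mult_times_id I"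
  then show "(x, y, Sup Z) \<in> mult_times_id I"
    unfolding mult_times_id_def by (auto intro!: tensA_ideal_Sup_right[OF I])
next
  fix x a y z show "(ra x a, y, z) \<in> mult_times_id I \<longleftrightarrow> (x, la a y, z) \<in> mult_times_id I"
    unfolding mult_times_id_def by (simp add: mult_ra)
next
  fix x a y z show "(x, ra y a, z) \<in> mult_times_id I \<longleftrightarrow> (x, y, la a z) \<in> mult_times_id I"
    unfolding mult_times_id_def by (simp add: ra_mult[symmetric] tensA_ideal_balanced[OF I])
qed

definition mult_times_id_radj where
  "mult_times_id_radj T = {(p, w). mS la ra mult p \<subseteq> {(u, v). (u, v, w) \<in> T}}"

lemma mult_times_id_subset_iff:
  assumes I: "tensA_ideal la ra I"
  shows "mult_times_id I \<subseteq> T \<longleftrightarrow> I \<subseteq> mult_times_id_radj T"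
proof
  assume "mult_times_id I \<subseteq> T"
  then show "I \<subseteq> mult_times_id_radj T"
    using tensA_ideal_down[OF I] by (fastforce simp: mult_times_id_def mult_times_id_radj_def mem_mS)
next
  assume "I \<subseteq> mult_times_id_radj T"
  moreover have "(u, v) \<in> mS la ra mult (mult u v)" for u v
    by (simp add: mem_mS)
  ultimately show "mult_times_id I \<subseteq> T"
    by (fastforce simp: mult_times_id_def mult_times_id_radj_def)
qed

lemma mult_times_id_radj_balanced:
  assumes T: "tens3_ideal la ra T"
  shows "(ra p a, w) \<in> mult_times_id_radj T \<longleftrightarrow> (p, la a w) \<in> mult_times_id_radj T"
proof
  assume K: "(ra p a, w) \<in> mult_times_id_radj T"
  have "(u, v, la a w) \<in> T" if "mult u v \<le> p" for u v
  proof -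
    have "(u, ra v a) \<in> mS la ra mult (ra p a)"
      using that by (simp add: mem_mS ra_mult[symmetric] ra_mono)
    with K have "(u, ra v a, w) \<in> T"
      by (auto simp: mult_times_id_radj_def)
    then show ?thesis
      using tens3_ideal_balanced_23[OF T] by blast
  qed
  then show "(p, la a w) \<in> mult_times_id_radj T"
    by (auto simp: mult_times_id_radj_def mem_mS)
next
  assume K: "(p, la a w) \<in> mult_times_id_radj T"
  have "(u, ra v a) \<in> {(u, v). (u, v, w) \<in> T}" if "mult u v \<le> p" for u v
  proof -
    have "(u, v) \<in> mS la ra mult p"
      using that by (simp add: mem_mS)
    with K have "(u, v, la a w) \<in> T"
      by (auto simp: mult_times_id_radj_def)
    then show ?thesis
      using tens3_ideal_balanced_23[OF T] by blast
  qed
  then show "(ra p a, w) \<in> mult_times_id_radj T"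
    using mS_ra_subset[OF tensA_ideal_fibre_3[OF T]] by (auto simp: mult_times_id_radj_def)
qed

text \<open>Closure under joins in the first variable is where multiplicativity enters.\<close>
lemma tensA_ideal_mult_times_id_radj:
  assumes T: "tens3_ideal la ra T"
  shows "tensA_ideal la ra (mult_times_id_radj T)"
proof (rule tensA_idealI)
  fix p w p' w' assume K: "(p, w) \<in> mult_times_id_radj T" and "p' \<le> p" "w' \<le> w"
  have "(u, v, w') \<in> T" if "mult u v \<le> p'" for u v
  proof -
    have "(u, v) \<in> mS la ra mult p"
      using order_trans[OF that \<open>p' \<le> p\<close>] by (simp add: mem_mS)
    with K have "(u, v, w) \<in> T"
      by (auto simp: mult_times_id_radj_def)
    then show ?thesis
      using tens3_ideal_down[OF T _ order_refl order_refl \<open>w' \<le> w\<close>] by blast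
  qed
  then show "(p', w') \<in> mult_times_id_radj T"
    by (auto simp: mult_times_id_radj_def mem_mS)
next
  fix X w assume "\<And>p. p \<in> X \<Longrightarrow> (p, w) \<in> mult_times_id_radj T"
  moreover have "{(u, v). (u, v, w) \<in> T} \<in> G2 la ra"
    using tensA_ideal_fibre_3[OF T] by (simp add: G2_def)
  ultimately have "cjoin (G2 la ra) (mS la ra mult ` X) \<subseteq> {(u, v). (u, v, w) \<in> T}"
    by (intro cjoin_least) (auto simp: mult_times_id_radj_def)
  then show "(Sup X, w) \<in> mult_times_id_radj T"
    by (simp add: mS_Sup mult_times_id_radj_def)
next
  fix p W assume "\<And>w. w \<in> W \<Longrightarrow> (p, w) \<in> mult_times_id_radj T"
  then show "(p, Sup W) \<in> mult_times_id_radj T"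
    by (auto simp: mult_times_id_radj_def mem_mS intro!: tens3_ideal_Sup_3[OF T])
qed (rule mult_times_id_radj_balanced[OF T])

lemma frame_hom_mult_times_id: "frame_hom (G2 la ra) (G3 la ra) mult_times_id"
proof (rule frame_homI)
  fix S assume "S \<subseteq> G2 la ra"
  then show "mult_times_id (cjoin (G2 la ra) S) = cjoin (G3 la ra) (mult_times_id ` S)"
    using G2_Inf_closed G3_Inf_closed tens3_ideal_mult_times_id tensA_ideal_mult_times_id_radj
      mult_times_id_subset_iff
    by (intro cjoin_left_adjoint[where k = mult_times_id_radj]) (auto simp: G2_def G3_def)
qed (auto simp: G2_def G3_def mult_times_id_def intro: tens3_ideal_mult_times_id[unfolded mult_times_id_def])

text \<open>Conjugating by the involution turns \<open>(m \<times> id)\<^sup>*\<close> into \<open>(id \<times> m)\<^sup>*\<close>, which spares a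
  second join-preservation argument.\<close>
lemma id_times_mult_eq: "id_times_mult = reverse3 \<circ> mult_times_id \<circ> twist"
  by (auto simp: id_times_mult_def reverse3_def mult_times_id_def twist_def star_mult)

lemma frame_hom_id_times_mult: "frame_hom (G2 la ra) (G3 la ra) id_times_mult"
  unfolding id_times_mult_eq
  by (rule frame_hom_comp[OF frame_hom_twist frame_hom_comp[OF frame_hom_mult_times_id frame_hom_reverse3]])

lemma tens3_ideal_id_times_mult: "tensA_ideal la ra I \<Longrightarrow> tens3_ideal la ra (id_times_mult I)"
  using frame_hom_id_times_mult unfolding frame_hom_def G2_def G3_def by blast

lemma mult_times_id_pi1: "mult_times_id (pi1 la ra x) = p12 la ra (mS la ra mult x)"
proof (rule sym, rule p12_eqI)
  show "tens3_ideal la ra (mult_times_id (pi1 la ra x))"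
    using pi1_in_G2 tens3_ideal_mult_times_id by (simp add: G2_def)
  show "{(u, v, w). (u, v) \<in> mS la ra mult x} \<subseteq> mult_times_id (pi1 la ra x)"
  proof (clarsimp simp: mult_times_id_def mem_pi1 mem_mS)
    fix u v w assume "mult u v \<le> x"
    then show "ra (mult u v) (supp w) \<le> x"
      using ra_le[of "mult u v" "supp w"] by simp
  qed
  fix J assume J: "tens3_ideal la ra J" and sub: "{(u, v, w). (u, v) \<in> mS la ra mult x} \<subseteq> J"
  show "mult_times_id (pi1 la ra x) \<subseteq> J"
  proof (clarsimp simp: mult_times_id_def mem_pi1)
    fix u v w assume "ra (mult u v) (supp w) \<le> x"
    then have "(u, ra v (supp w), w) \<in> J"
      using sub by (auto simp: mem_mS ra_mult)
    then show "(u, v, w) \<in> J"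
      using tens3_ideal_balanced_23[OF J] by simp
  qed
qed

lemma mult_times_id_pi2: "mult_times_id (pi2 la ra y) = p23 la ra (pi2 la ra y)"
proof (rule sym, rule p23_eqI)
  show "tens3_ideal la ra (mult_times_id (pi2 la ra y))"
    using pi2_in_G2 tens3_ideal_mult_times_id by (simp add: G2_def)
  show "{(u, v, w). (v, w) \<in> pi2 la ra y} \<subseteq> mult_times_id (pi2 la ra y)"
  proof (clarsimp simp: mult_times_id_def mem_pi2)
    fix u v w assume "la (rsupp v) w \<le> y"
    then show "la (rsupp (mult u v)) w \<le> y"
      using la_mono[OF rsupp_mult_le[of u v] order_refl[of w]] by simp
  qed
  fix J assume J: "tens3_ideal la ra J" and sub: "{(u, v, w). (v, w) \<in> pi2 la ra y} \<subseteq> J"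
  show "mult_times_id (pi2 la ra y) \<subseteq> J"
  proof (clarsimp simp: mult_times_id_def mem_pi2)
    fix u v w assume "la (rsupp (mult u v)) w \<le> y"
    then have "(u, la (rsupp u) v, w) \<in> J"
      using sub by (auto simp: mem_pi2 rsupp_mult)
    then have "(ra u (rsupp u), v, w) \<in> J"
      using tens3_ideal_balanced_12[OF J] by blast
    then show "(u, v, w) \<in> J"
      by simp
  qed
qed

lemma id_times_mult_pi1: "id_times_mult (pi1 la ra x) = p12 la ra (pi1 la ra x)"
proof (rule sym, rule p12_eqI)
  show "tens3_ideal la ra (id_times_mult (pi1 la ra x))"
    using pi1_in_G2 tens3_ideal_id_times_mult by (simp add: G2_def)
  show "{(u, v, w). (u, v) \<in> pi1 la ra x} \<subseteq> id_times_mult (pi1 la ra x)"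
  proof (clarsimp simp: id_times_mult_def mem_pi1)
    fix u v w assume "ra u (supp v) \<le> x"
    then show "ra u (supp (mult v w)) \<le> x"
      using ra_mono[OF order_refl[of u] supp_mult_le[of v w]] by simp
  qed
  fix J assume J: "tens3_ideal la ra J" and sub: "{(u, v, w). (u, v) \<in> pi1 la ra x} \<subseteq> J"
  show "id_times_mult (pi1 la ra x) \<subseteq> J"
  proof (clarsimp simp: id_times_mult_def mem_pi1)
    fix u v w assume "ra u (supp (mult v w)) \<le> x"
    then have "(u, ra v (supp w), w) \<in> J"
      using sub by (auto simp: mem_pi1 supp_mult)
    then show "(u, v, w) \<in> J"
      using tens3_ideal_balanced_23[OF J] by simp
  qed
qed

lemma id_times_mult_pi2: "id_times_mult (pi2 la ra y) = p23 la ra (mS la ra mult y)"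
proof (rule sym, rule p23_eqI)
  show "tens3_ideal la ra (id_times_mult (pi2 la ra y))"
    using pi2_in_G2 tens3_ideal_id_times_mult by (simp add: G2_def)
  show "{(u, v, w). (v, w) \<in> mS la ra mult y} \<subseteq> id_times_mult (pi2 la ra y)"
  proof (clarsimp simp: id_times_mult_def mem_pi2 mem_mS)
    fix u v w assume "mult v w \<le> y"
    then show "la (rsupp u) (mult v w) \<le> y"
      using la_le[of "rsupp u" "mult v w"] by simp
  qed
  fix J assume J: "tens3_ideal la ra J" and sub: "{(u, v, w). (v, w) \<in> mS la ra mult y} \<subseteq> J"
  show "id_times_mult (pi2 la ra y) \<subseteq> J"
  proof (clarsimp simp: id_times_mult_def mem_pi2)
    fix u v w assume "la (rsupp u) (mult v w) \<le> y"
    then have "(u, la (rsupp u) v, w) \<in> J"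
      using sub by (auto simp: mem_mS mult_la)
    then have "(ra u (rsupp u), v, w) \<in> J"
      using tens3_ideal_balanced_12[OF J] by blast
    then show "(u, v, w) \<in> J"
      by simp
  qed
qed

lemma is_pairing_mult_times_id:
  "is_pairing (G2 la ra) (pi1 la ra) (pi2 la ra) (G3 la ra)
     (p12 la ra \<circ> mS la ra mult) (p23 la ra \<circ> pi2 la ra) mult_times_id"
  by (auto simp: is_pairing_def frame_hom_mult_times_id mult_times_id_pi1 mult_times_id_pi2)

lemma is_pairing_id_times_mult:
  "is_pairing (G2 la ra) (pi1 la ra) (pi2 la ra) (G3 la ra)
     (p12 la ra \<circ> pi1 la ra) (p23 la ra \<circ> mS la ra mult) id_times_mult"
  by (auto simp: is_pairing_def frame_hom_id_times_mult id_times_mult_pi1 id_times_mult_pi2)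

lemma mS_assoc:
  assumes "is_pairing (G2 la ra) (pi1 la ra) (pi2 la ra) (G3 la ra)
      (p12 la ra \<circ> mS la ra mult) (p23 la ra \<circ> pi2 la ra) h1"
    and "is_pairing (G2 la ra) (pi1 la ra) (pi2 la ra) (G3 la ra)
      (p12 la ra \<circ> pi1 la ra) (p23 la ra \<circ> mS la ra mult) h2"
  shows "h1 \<circ> mS la ra mult = h2 \<circ> mS la ra mult"
proof
  fix a
  have "h1 (mS la ra mult a) = mult_times_id (mS la ra mult a)"
    by (rule is_pairing_unique[OF assms(1) is_pairing_mult_times_id mS_in_G2])
  also have "\<dots> = id_times_mult (mS la ra mult a)"
    by (auto simp: mult_times_id_def id_times_mult_def mem_mS mult_assoc)
  also have "\<dots> = h2 (mS la ra mult a)"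
    by (rule is_pairing_unique[OF is_pairing_id_times_mult assms(2) mS_in_G2])
  finally show "(h1 \<circ> mS la ra mult) a = (h2 \<circ> mS la ra mult) a"
    by simp
qed

end

section \<open>Unit laws\<close>

locale unital_supported_bqf = supported_bqf +
  fixes ups
  assumes reflexive: "reflexive_bqf la ra ups"
    and unit_laws: "unit_laws la mult ups"
begin

lemma frame_hom_ups: "frame_hom UNIV UNIV ups"
  using reflexive unfolding reflexive_bqf_def by blast

lemma ups_la_top [simp]: "ups (la a top) = a"
  using reflexive unfolding reflexive_bqf_def by blast

lemma ups_ra_top [simp]: "ups (ra top a) = a"
  using reflexive unfolding reflexive_bqf_def by blast

lemma ups_inf: "ups (inf x y) = inf (ups x) (ups y)"
  using frame_hom_inf[OF frame_hom_ups] by simp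

lemma ups_Sup: "ups (Sup X) = Sup (ups ` X)"
  using frame_hom_cjoin[OF frame_hom_ups] by (simp add: cjoin_UNIV)

lemma ups_top [simp]: "ups top = top"
  using frame_hom_ups unfolding frame_hom_def by blast

lemma ups_ra: "ups (ra x a) = inf (ups x) a"
  by (subst ra_eq_inf) (simp add: ups_inf inf_commute)

lemma unit_law_left: "Sup {la (ups x) y | x y. mult x y \<le> a} = a"
  using unit_laws unfolding unit_laws_def by blast

lemma Collect_mult_le_star:
  "{f x y | x y. mult x y \<le> star a} = {f (star y) (star x) | x y. mult x y \<le> a}"
proof (intro set_eqI iffI)
  fix z assume "z \<in> {f x y | x y. mult x y \<le> star a}"
  then obtain x y where "z = f (star (star x)) (star (star y))" "mult (star y) (star x) \<le> a"
    by (auto simp: star_le_iff star_mult[symmetric])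
  then show "z \<in> {f (star y) (star x) | x y. mult x y \<le> a}"
    by blast
next
  fix z assume "z \<in> {f (star y) (star x) | x y. mult x y \<le> a}"
  then obtain x y where "z = f (star y) (star x)" "mult (star y) (star x) \<le> star a"
    by (auto simp: star_le_iff star_mult[symmetric])
  then show "z \<in> {f x y | x y. mult x y \<le> star a}"
    by blast
qed

lemma unit_law_right_star: "Sup {ra x (ups (star y)) | x y. mult x y \<le> a} = a"
proof -
  have "a = star (Sup {la (ups x) y | x y. mult x y \<le> star a})"
    by (simp add: unit_law_left)
  also have "\<dots> = Sup {star (la (ups (star y)) (star x)) | x y. mult x y \<le> a}"
    unfolding Collect_mult_le_star star_Sup image_Collect_pairs ..
  finally show ?thesis
    by (simp add: star_la)
qed

lemma ups_star: "ups (star a) = ups a"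
proof -
  have "ups (star a) = ups (star (Sup {la (ups x) y | x y. mult x y \<le> a}))"
    by (simp add: unit_law_left)
  also have "\<dots> = Sup {inf (ups x) (ups (star y)) | x y. mult x y \<le> a}"
    unfolding star_Sup ups_Sup image_Collect_pairs by (simp add: star_la ups_ra inf_commute)
  also have "\<dots> = ups (Sup {ra x (ups (star y)) | x y. mult x y \<le> a})"
    unfolding ups_Sup image_Collect_pairs by (simp add: ups_ra)
  also have "\<dots> = ups a"
    by (simp add: unit_law_right_star)
  finally show ?thesis .
qed

lemma unit_law_right: "Sup {ra x (ups y) | x y. mult x y \<le> a} = a"
  using unit_law_right_star by (simp add: ups_star)

lemma ups_comp_dS: "ups \<circ> dS la = id"
  by (auto simp: dS_def)

lemma ups_comp_rS: "ups \<circ> (star \<circ> dS la) = id"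
  by (auto simp: dS_def star_la)

lemma balanced_la_ups: "balanced_bimorphism la ra (\<lambda>x y. la (ups x) y)"
  unfolding balanced_bimorphism_def
  by (simp add: ups_Sup la_Sup_left la_Sup_right image_image ups_ra la_inf)

lemma is_pairing_unit_left:
  "is_pairing (G2 la ra) (pi1 la ra) (pi2 la ra) UNIV (dS la \<circ> ups) id (tensA_lift (\<lambda>x y. la (ups x) y))"
  unfolding is_pairing_def
proof (intro conjI)
  show "frame_hom (G2 la ra) UNIV (tensA_lift (\<lambda>x y. la (ups x) y))"
    by (rule frame_hom_tensA_lift[OF frame_Q balanced_la_ups]) (simp_all add: ups_inf la_inf_inf)
qed (auto simp: pi1_def pi2_def dS_def tensA_lift_tensA[OF balanced_la_ups])

lemma unit_law_left_pairing:
  "induced_law (is_pairing (G2 la ra) (pi1 la ra) (pi2 la ra) UNIV (dS la \<circ> ups) id)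
     (\<lambda>h. h \<circ> mS la ra mult = id)"
  unfolding induced_law_def
proof (intro conjI exI allI impI ext)
  fix h a
  assume "is_pairing (G2 la ra) (pi1 la ra) (pi2 la ra) UNIV (dS la \<circ> ups) id h"
  then have h: "frame_hom (G2 la ra) UNIV h"
    and "h (pi1 la ra x) = la (ups x) top" and "h (pi2 la ra y) = y" for x y
    unfolding is_pairing_def dS_def by (auto dest: fun_cong)
  then have "h (mS la ra mult a) = Sup {la (ups x) y | x y. mult x y \<le> a}"
    by (simp add: frame_hom_G2_eq[OF h mS_in_G2] cjoin_UNIV mem_mS la_eq_inf[symmetric])
  then show "(h \<circ> mS la ra mult) a = id a"
    by (simp add: unit_law_left)
qed (rule is_pairing_unit_left)

lemma is_pairing_unit_right:
  "is_pairing (G2 la ra) (pi1 la ra) (pi2 la ra) UNIV id ((star \<circ> dS la) \<circ> ups)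
     (star \<circ> tensA_lift (\<lambda>x y. la (ups x) y) \<circ> twist)"
proof -
  have "frame_hom (G2 la ra) UNIV (tensA_lift (\<lambda>x y. la (ups x) y))"
    using is_pairing_unit_left unfolding is_pairing_def by blast
  then have "frame_hom (G2 la ra) UNIV (star \<circ> tensA_lift (\<lambda>x y. la (ups x) y) \<circ> twist)"
    by (intro frame_hom_comp[OF frame_hom_twist] frame_hom_comp[OF _ frame_hom_star])
  moreover have "tensA_lift (\<lambda>x y. la (ups x) y) (pi1 la ra x) = la (ups x) top"
    and "tensA_lift (\<lambda>x y. la (ups x) y) (pi2 la ra x) = x" for x
    using is_pairing_unit_left unfolding is_pairing_def dS_def by (auto dest: fun_cong)
  ultimately show ?thesis
    by (auto simp: is_pairing_def twist_pi1 twist_pi2 dS_def star_la ups_star)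
qed

lemma unit_law_right_pairing:
  "induced_law (is_pairing (G2 la ra) (pi1 la ra) (pi2 la ra) UNIV id ((star \<circ> dS la) \<circ> ups))
     (\<lambda>h. h \<circ> mS la ra mult = id)"
  unfolding induced_law_def
proof (intro conjI exI allI impI ext)
  fix h a
  assume "is_pairing (G2 la ra) (pi1 la ra) (pi2 la ra) UNIV id ((star \<circ> dS la) \<circ> ups) h"
  then have h: "frame_hom (G2 la ra) UNIV h"
    and "h (pi1 la ra x) = x" and "h (pi2 la ra y) = ra top (ups y)" for x y
    unfolding is_pairing_def dS_def by (auto dest: fun_cong simp: star_la)
  moreover have "inf x (ra top (ups y)) = ra x (ups y)" for x y
    by (simp add: ra_eq_inf[of x] inf_commute)
  ultimately have "h (mS la ra mult a) = Sup {ra x (ups y) | x y. mult x y \<le> a}"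
    by (simp add: frame_hom_G2_eq[OF h mS_in_G2] cjoin_UNIV mem_mS)
  then show "(h \<circ> mS la ra mult) a = id a"
    by (simp add: unit_law_right)
qed (rule is_pairing_unit_right)

end

theorem lemma5p2:
  fixes la :: "'a::complete_lattice \<Rightarrow> 'q::complete_lattice \<Rightarrow> 'q"
    and ra :: "'q \<Rightarrow> 'a \<Rightarrow> 'q"
    and mult :: "'q \<Rightarrow> 'q \<Rightarrow> 'q"
    and star :: "'q \<Rightarrow> 'q"
    and supp :: "'q \<Rightarrow> 'a"
    and ups :: "'q \<Rightarrow> 'a"
  assumes "is_frame TYPE('a)"
    and "based_quantal_frame la ra mult star"
    and "support la mult star supp"
    and "equivariant_support la supp"
    and "reflexive_bqf la ra ups"
    and "multiplicative la ra mult"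
    and "unit_laws la mult ups"
  shows "open_involutive_category (G2 la ra) (pi1 la ra) (pi2 la ra) (G3 la ra) (p12 la ra) (p23 la ra)
           (dS la) ups (mS la ra mult) star"
proof -
  interpret multiplicative_supported_bqf la ra mult star supp
    by unfold_locales (rule assms)+
  interpret unital_supported_bqf la ra mult star supp ups
    by unfold_locales (rule assms)+
  show ?thesis
    unfolding open_involutive_category_def Let_def
    using frame_hom_dS frame_hom_ups frame_hom_mS frame_hom_star ups_comp_dS ups_comp_rS
      mS_comp_dS mS_comp_rS unit_law_left_pairing unit_law_right_pairing
      is_pairing_mult_times_id is_pairing_id_times_mult mS_assoc
      star_comp_star mS_star_pairing open_map_dS
    by blast
qed

end
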